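(* Let $(Q,P)$ be a weakly quasi-lattice ordered group and let $\Lambda$ be a finitely aligned $P$-graph (i.e. $\mathrm{FA}(\Lambda)=\Lambda$). Then the map $$G^{\mathrm{Spi}}_\Lambda\to\mathcal{G}(\Lambda),\qquad [\alpha,\beta,x]\mapsto(\alpha\cdot x,\ d(\alpha)d(\beta)^{-1},\ \beta\cdot x)$$ is a topological groupoid isomorphism. Moreover, the reductions $G^{\mathrm{Spi}}_\Lambda|_{\partial\Lambda}$ and $\partial\mathcal{G}(\Lambda)$ are topologically isomorphic.
   Context: $(Q,P)$ weakly quasi-lattice ordered: $Q$ a discrete group, $P\subseteq Q$ a subsemigroup containing the identity $e$ with $P\cap P^{-1}=\{e\}$, and, with $p\le r$ meaning $pq=r$ for some $q\in P$, any two elements of $P$ with a common upper bound have a least common upper bound. A $P$-graph is a countable small category $\Lambda$ (identities $\Lambda^{(0)}$, range/source $r,s$) with a functor $d:\Lambda\to P$ with unique factorisation (if $d(\lambda)=pq$ there are unique $\mu,\nu$ with $\lambda=\mu\nu$, $d(\mu)=p$, $d(\nu)=q$). Write $\Lambda^m=d^{-1}(m)$, $\lambda\Lambda=\{\lambda\mu: s(\lambda)=r(\mu)\}$, $\mu\preceq\lambda$ iff $\lambda\in\mu\Lambda$. $\Lambda$ is finitely aligned if for all $\mu,\nu$ there is finite $J$ with $\mu\Lambda\cap\nu\Lambda=\bigcup_{\kappa\in J}\kappa\Lambda$. A filter is a nonempty hereditary and directed subset of $\Lambda$ (w.r.t. $\preceq$); $\mathcal{F}(\Lambda)$ the filters,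 $\mathcal{U}(\Lambda)$ the maximal filters; each filter $x$ contains a unique $r(x)\in\Lambda^{(0)}$. For a filter $x$ with $r(x)=s(\alpha)$, $\alpha\cdot x=\{\zeta: \zeta\preceq\alpha\gamma\text{ for some }\gamma\in x\}$. $\mathcal{F}(\Lambda)$ has the subspace topology from $\mathcal{P}(\Lambda)\cong\{0,1\}^\Lambda$ (product topology). Since $\Lambda$ is finitely aligned, the path space is $\mathcal{F}(\Lambda)$. For $x\in\mathcal{F}(\Lambda)$, $m\in P$ with $x\cap\Lambda^m\neq\emptyset$ (write $x\in\mathrm{dom}(m)$), $x(0,m)$ is the unique element of $x\cap\Lambda^m$ and $x\cdot m=\{\mu: x(0,m)\mu\in x\}$. The path groupoid $\mathcal{G}(\Lambda)$ is the set of $(x,q,y)\in\mathcal{F}(\Lambda)\times Q\times\mathcal{F}(\Lambda)$ such that $q=mn^{-1}$, $x\in\mathrm{dom}(m)$, $y\in\mathrm{dom}(n)$, $x\cdot m=y\cdot n$ for some $m,n\in P$; product $(x,q,y)(y,r,z)=(x,qr,z)$, inverse $(y,q^{-1},x)$; topology with basis $\{(x,mn^{-1},y)\in\mathcal{G}(\Lambda): x\in U, y\in V, x\cdot m=y\cdot n\}$, $m,n\in P$, $U,V$ open. The boundary-path groupoid $\partial\mathcal{G}(\Lambda)$ is the reduction of $\mathcal{G}(\Lambda)$ (unit space identified with $\mathcal{F}(\Lambda)$ via $x\mapsto(x,e,x)$) to the closure $\partial\Lambda$ of $\mathcal{U}(\Lambda)$ in $\mathcal{F}(\Lambda)$. Spielberg's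 groupoid: for $\alpha\in\Lambda$ and $\beta_1,\dots,\beta_n\in\alpha\Lambda\setminus\{\alpha\}$, put $E=\alpha\Lambda\setminus\bigcup_i\beta_i\Lambda$ and $\hat E=\{x\in\mathcal{F}(\Lambda): x\cap\gamma\Lambda\subseteq E\text{ for some }\gamma\in x\}$; the sets $\hat E$ form a basis of a topology $\tau$ on $\mathcal{F}(\Lambda)$. On $\{(\alpha,\beta,x)\in\Lambda\times\Lambda\times\mathcal{F}(\Lambda): s(\alpha)=s(\beta)=r(x)\}$ set $(\alpha,\beta,x)\sim(\alpha',\beta',x')$ iff there are $y\in\mathcal{F}(\Lambda)$, $\gamma,\gamma'\in\Lambda$ with $x=\gamma\cdot y$, $x'=\gamma'\cdot y$, $\alpha\gamma=\alpha'\gamma'$, $\beta\gamma=\beta'\gamma'$; this is an equivalence relation, and $G^{\mathrm{Spi}}_\Lambda$ is the set of classes $[\alpha,\beta,x]$. A pair $([\alpha,\beta,x],[\gamma,\delta,y])$ is composable iff $\beta\cdot x=\gamma\cdot y$; then there are $z\in\mathcal{F}(\Lambda)$, $\xi,\eta\in\Lambda$ with $x=\xi\cdot z$, $y=\eta\cdot z$, $\beta\xi=\gamma\eta$, and the product is $[\alpha\xi,\delta\eta,z]$; inverse $[\alpha,\beta,x]^{-1}=[\beta,\alpha,x]$. Its topology has basis the sets $[\alpha,\beta,B]=\{[\alpha,\beta,x]: x\in B\}$ for $B$ in a basis of $\tau$. $G^{\mathrm{Spi}}_\Lambda|_{\partial\Lambda}$ is its reduction to $\partial\Lambda$ (unit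 space identified with $\mathcal{F}(\Lambda)$ via $x\mapsto[r(x),r(x),x]$). *)

theory Defs
  imports "HOL-Analysis.Analysis"
begin

text \<open>The group Q is a type of class group_add (written additively, not necessarily
abelian): the paper's product pq is p + q, the identity e is 0, and
m n^{-1} is m - n.  P is a subset of Q.\<close>

definition ple :: "'q::group_add set \<Rightarrow> 'q \<Rightarrow> 'q \<Rightarrow> bool" where
  "ple P p r \<longleftrightarrow> (\<exists>q\<in>P. p + q = r)"

definition wqlo :: "'q::group_add set \<Rightarrow> bool" where
  "wqlo P \<longleftrightarrow>
     0 \<in> P \<and> (\<forall>p\<in>P. \<forall>q\<in>P. p + q \<in> P) \<and> P \<inter> uminus ` P = {0} \<and>
     (\<forall>p\<in>P. \<forall>q\<in>P. (\<exists>u\<in>P. ple P p u \<and> ple P q u) \<longrightarrow>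
        (\<exists>l\<in>P. ple P p l \<and> ple P q l \<and> (\<forall>u\<in>P. ple P p u \<and> ple P q u \<longrightarrow> ple P l u)))"

text \<open>A small category: morphisms Mor, identities Obj (a subset of Mor), range rng,
source src, (partial) composition cmp (meaningful when src l = rng m), degree functor deg.\<close>

record ('a, 'q) pgraph =
  Mor :: "'a set"
  Obj :: "'a set"
  rng :: "'a \<Rightarrow> 'a"
  src :: "'a \<Rightarrow> 'a"
  cmp :: "'a \<Rightarrow> 'a \<Rightarrow> 'a"
  deg :: "'a \<Rightarrow> 'q"

definition is_pgraph :: "'q::group_add set \<Rightarrow> ('a, 'q) pgraph \<Rightarrow> bool" where
  "is_pgraph P L \<longleftrightarrow>
     countable (Mor L) \<and> Obj L \<subseteq> Mor L \<and>
     (\<forall>l\<in>Mor L. rng L l \<in> Obj L \<and> src L l \<in> Obj L) \<and>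
     (\<forall>v\<in>Obj L. rng L v = v \<and> src L v = v) \<and>
     (\<forall>l\<in>Mor L. cmp L (rng L l) l = l \<and> cmp L l (src L l) = l) \<and>
     (\<forall>l\<in>Mor L. \<forall>m\<in>Mor L. src L l = rng L m \<longrightarrow>
        cmp L l m \<in> Mor L \<and> rng L (cmp L l m) = rng L l \<and> src L (cmp L l m) = src L m) \<and>
     (\<forall>l\<in>Mor L. \<forall>m\<in>Mor L. \<forall>n\<in>Mor L. src L l = rng L m \<and> src L m = rng L n \<longrightarrow>
        cmp L (cmp L l m) n = cmp L l (cmp L m n)) \<and>
     (\<forall>l\<in>Mor L. deg L l \<in> P) \<and>
     (\<forall>l\<in>Mor L. \<forall>m\<in>Mor L. src L l = rng L m \<longrightarrow> deg L (cmp L l m) = deg L l + deg L m) \<and>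
     (\<forall>l\<in>Mor L. \<forall>p\<in>P. \<forall>q\<in>P. deg L l = p + q \<longrightarrow>
        (\<exists>!(m, n). m \<in> Mor L \<and> n \<in> Mor L \<and> src L m = rng L n \<and>
                   cmp L m n = l \<and> deg L m = p \<and> deg L n = q))"

definition ext :: "('a, 'q) pgraph \<Rightarrow> 'a \<Rightarrow> 'a set" where
  "ext L l = {cmp L l m | m. m \<in> Mor L \<and> src L l = rng L m}"

definition pre :: "('a, 'q) pgraph \<Rightarrow> 'a \<Rightarrow> 'a \<Rightarrow> bool" where
  "pre L m l \<longleftrightarrow> m \<in> Mor L \<and> l \<in> ext L m"

definition finitely_aligned :: "('a, 'q) pgraph \<Rightarrow> bool" where
  "finitely_aligned L \<longleftrightarrow>
     (\<forall>m\<in>Mor L. \<forall>n\<in>Mor L. \<exists>J. finite J \<and> J \<subseteq> Mor L \<and>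
        ext L m \<inter> ext L n = (\<Union>k\<in>J. ext L k))"

definition is_filter :: "('a, 'q) pgraph \<Rightarrow> 'a set \<Rightarrow> bool" where
  "is_filter L x \<longleftrightarrow> x \<subseteq> Mor L \<and> x \<noteq> {} \<and>
     (\<forall>l\<in>x. \<forall>m. pre L m l \<longrightarrow> m \<in> x) \<and>
     (\<forall>l\<in>x. \<forall>m\<in>x. \<exists>k\<in>x. pre L l k \<and> pre L m k)"

definition filters :: "('a, 'q) pgraph \<Rightarrow> 'a set set" where
  "filters L = {x. is_filter L x}"

definition max_filters :: "('a, 'q) pgraph \<Rightarrow> 'a set set" where
  "max_filters L = {x \<in> filters L. \<forall>y\<in>filters L. x \<subseteq> y \<longrightarrow> y = x}"

definition frng :: "('a, 'q) pgraph \<Rightarrow> 'a set \<Rightarrow> 'a" where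
  "frng L x = (THE v. v \<in> Obj L \<and> v \<in> x)"

definition fcat :: "('a, 'q) pgraph \<Rightarrow> 'a \<Rightarrow> 'a set \<Rightarrow> 'a set" where
  "fcat L a x = {z. \<exists>g\<in>x. src L a = rng L g \<and> pre L z (cmp L a g)}"

definition in_dom :: "('a, 'q) pgraph \<Rightarrow> 'a set \<Rightarrow> 'q \<Rightarrow> bool" where
  "in_dom L x m \<longleftrightarrow> (\<exists>l\<in>x. deg L l = m)"

definition seg :: "('a, 'q) pgraph \<Rightarrow> 'a set \<Rightarrow> 'q \<Rightarrow> 'a" where
  "seg L x m = (THE l. l \<in> x \<and> deg L l = m)"

definition fshift :: "('a, 'q) pgraph \<Rightarrow> 'a set \<Rightarrow> 'q \<Rightarrow> 'a set" where
  "fshift L x m = {n \<in> Mor L. src L (seg L x m) = rng L n \<and> cmp L (seg L x m) n \<in> x}"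

text \<open>Topology on the filters: subspace of the product topology on P(\<Lambda>) = {0,1}^\<Lambda>,
generated by the cylinder sets {x. l \<in> x} and {x. l \<notin> x}.\<close>
definition filter_top :: "('a, 'q) pgraph \<Rightarrow> 'a set topology" where
  "filter_top L = subtopology
     (topology_generated_by ({{x. l \<in> x} | l. l \<in> Mor L} \<union> {{x. l \<notin> x} | l. l \<in> Mor L}))
     (filters L)"

definition bdry :: "('a, 'q) pgraph \<Rightarrow> 'a set set" where
  "bdry L = (filter_top L) closure_of (max_filters L)"

text \<open>A groupoid is given by its carrier, composability predicate, product and inverse.\<close>
definition top_groupoid_iso ::
  "'g topology \<Rightarrow> 'g set \<Rightarrow> ('g \<Rightarrow> 'g \<Rightarrow> bool) \<Rightarrow> ('g \<Rightarrow> 'g \<Rightarrow> 'g) \<Rightarrow> ('g \<Rightarrow> 'g) \<Rightarrow>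
   'h topology \<Rightarrow> 'h set \<Rightarrow> ('h \<Rightarrow> 'h \<Rightarrow> bool) \<Rightarrow> ('h \<Rightarrow> 'h \<Rightarrow> 'h) \<Rightarrow> ('h \<Rightarrow> 'h) \<Rightarrow>
   ('g \<Rightarrow> 'h) \<Rightarrow> bool" where
  "top_groupoid_iso X G cG mG iG Y H cH mH iH f \<longleftrightarrow>
     bij_betw f G H \<and> homeomorphic_map X Y f \<and>
     (\<forall>a\<in>G. \<forall>b\<in>G. cG a b \<longleftrightarrow> cH (f a) (f b)) \<and>
     (\<forall>a\<in>G. \<forall>b\<in>G. cG a b \<longrightarrow> f (mG a b) = mH (f a) (f b)) \<and>
     (\<forall>a\<in>G. f (iG a) = iH (f a))"

definition pg_set :: "'q::group_add set \<Rightarrow> ('a, 'q) pgraph \<Rightarrow> ('a set \<times> 'q \<times> 'a set) set" where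
  "pg_set P L = {(x, q, y). x \<in> filters L \<and> y \<in> filters L \<and>
     (\<exists>m\<in>P. \<exists>n\<in>P. q = m - n \<and> in_dom L x m \<and> in_dom L y n \<and> fshift L x m = fshift L y n)}"

definition pg_comp :: "('a set \<times> 'q \<times> 'a set) \<Rightarrow> ('a set \<times> 'q \<times> 'a set) \<Rightarrow> bool" where
  "pg_comp g h \<longleftrightarrow> snd (snd g) = fst h"

definition pg_mult :: "('a set \<times> 'q::group_add \<times> 'a set) \<Rightarrow> ('a set \<times> 'q \<times> 'a set) \<Rightarrow> ('a set \<times> 'q \<times> 'a set)" where
  "pg_mult g h = (fst g, fst (snd g) + fst (snd h), snd (snd h))"

definition pg_inv :: "('a set \<times> 'q::group_add \<times> 'a set) \<Rightarrow> ('a set \<times> 'q \<times> 'a set)" where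
  "pg_inv g = (snd (snd g), - fst (snd g), fst g)"

definition pg_top :: "'q::group_add set \<Rightarrow> ('a, 'q) pgraph \<Rightarrow> ('a set \<times> 'q \<times> 'a set) topology" where
  "pg_top P L = subtopology (topology_generated_by
     {{(x, m - n, y) | x y. (x, m - n, y) \<in> pg_set P L \<and> x \<in> U \<and> y \<in> V \<and>
                          in_dom L x m \<and> in_dom L y n \<and> fshift L x m = fshift L y n}
      | m n U V. m \<in> P \<and> n \<in> P \<and> openin (filter_top L) U \<and> openin (filter_top L) V})
     (pg_set P L)"

definition bpg_set :: "'q::group_add set \<Rightarrow> ('a, 'q) pgraph \<Rightarrow> ('a set \<times> 'q \<times> 'a set) set" where
  "bpg_set P L = {g \<in> pg_set P L. fst g \<in> bdry L \<and> snd (snd g) \<in> bdry L}"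

text \<open>Basis of the topology \<tau>: the sets \<hat>E for E = a\<Lambda> minus the union of b\<Lambda> over finitely
many b in a\<Lambda> - {a}.\<close>
definition Ehat :: "('a, 'q) pgraph \<Rightarrow> 'a \<Rightarrow> 'a set \<Rightarrow> 'a set set" where
  "Ehat L a B = {x \<in> filters L. \<exists>g\<in>x. x \<inter> ext L g \<subseteq> ext L a - (\<Union>b\<in>B. ext L b)}"

definition spi_basis :: "('a, 'q) pgraph \<Rightarrow> 'a set set set" where
  "spi_basis L = {Ehat L a B | a B. a \<in> Mor L \<and> finite B \<and> B \<subseteq> ext L a - {a}}"

definition spi_tri :: "('a, 'q) pgraph \<Rightarrow> ('a \<times> 'a \<times> 'a set) set" where
  "spi_tri L = {(a, b, x). a \<in> Mor L \<and> b \<in> Mor L \<and> x \<in> filters L \<and>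
                           src L a = frng L x \<and> src L b = frng L x}"

definition spi_rel :: "('a, 'q) pgraph \<Rightarrow> (('a \<times> 'a \<times> 'a set) \<times> ('a \<times> 'a \<times> 'a set)) set" where
  "spi_rel L = {((a, b, x), (a', b', x')).
     (a, b, x) \<in> spi_tri L \<and> (a', b', x') \<in> spi_tri L \<and>
     (\<exists>y\<in>filters L. \<exists>g\<in>Mor L. \<exists>g'\<in>Mor L.
        src L g = frng L y \<and> src L g' = frng L y \<and>
        src L a = rng L g \<and> src L a' = rng L g' \<and>
        x = fcat L g y \<and> x' = fcat L g' y \<and>
        cmp L a g = cmp L a' g' \<and> cmp L b g = cmp L b' g')}"

definition spi_cls :: "('a, 'q) pgraph \<Rightarrow> 'a \<Rightarrow> 'a \<Rightarrow> 'a set \<Rightarrow> ('a \<times> 'a \<times> 'a set) set" where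
  "spi_cls L a b x = spi_rel L `` {(a, b, x)}"

definition spi_set :: "('a, 'q) pgraph \<Rightarrow> ('a \<times> 'a \<times> 'a set) set set" where
  "spi_set L = spi_tri L // spi_rel L"

definition spi_comp :: "('a, 'q) pgraph \<Rightarrow> ('a \<times> 'a \<times> 'a set) set \<Rightarrow> ('a \<times> 'a \<times> 'a set) set \<Rightarrow> bool" where
  "spi_comp L c d \<longleftrightarrow> (\<exists>a b x a' b' y. (a, b, x) \<in> spi_tri L \<and> (a', b', y) \<in> spi_tri L \<and>
      c = spi_cls L a b x \<and> d = spi_cls L a' b' y \<and> fcat L b x = fcat L a' y)"

definition spi_mult :: "('a, 'q) pgraph \<Rightarrow> ('a \<times> 'a \<times> 'a set) set \<Rightarrow> ('a \<times> 'a \<times> 'a set) set \<Rightarrow> ('a \<times> 'a \<times> 'a set) set" where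
  "spi_mult L c d = (THE e. \<exists>a b x g h y z xi eta.
      (a, b, x) \<in> spi_tri L \<and> (g, h, y) \<in> spi_tri L \<and>
      c = spi_cls L a b x \<and> d = spi_cls L g h y \<and> fcat L b x = fcat L g y \<and>
      z \<in> filters L \<and> xi \<in> Mor L \<and> eta \<in> Mor L \<and>
      src L xi = frng L z \<and> src L eta = frng L z \<and> src L b = rng L xi \<and> src L g = rng L eta \<and>
      x = fcat L xi z \<and> y = fcat L eta z \<and> cmp L b xi = cmp L g eta \<and>
      e = spi_cls L (cmp L a xi) (cmp L h eta) z)"

definition spi_inv :: "('a, 'q) pgraph \<Rightarrow> ('a \<times> 'a \<times> 'a set) set \<Rightarrow> ('a \<times> 'a \<times> 'a set) set" where
  "spi_inv L c = (THE e. \<exists>a b x. (a, b, x) \<in> spi_tri L \<and> c = spi_cls L a b x \<and> e = spi_cls L b a x)"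

definition spi_top :: "('a, 'q) pgraph \<Rightarrow> ('a \<times> 'a \<times> 'a set) set topology" where
  "spi_top L = subtopology (topology_generated_by
     {{spi_cls L a b x | x. x \<in> B \<and> (a, b, x) \<in> spi_tri L} | a b B.
        a \<in> Mor L \<and> b \<in> Mor L \<and> B \<in> spi_basis L})
     (spi_set L)"

definition spi_unit :: "('a, 'q) pgraph \<Rightarrow> 'a set \<Rightarrow> ('a \<times> 'a \<times> 'a set) set" where
  "spi_unit L x = spi_cls L (frng L x) (frng L x) x"

definition bspi_set :: "('a, 'q) pgraph \<Rightarrow> ('a \<times> 'a \<times> 'a set) set set" where
  "bspi_set L = {c \<in> spi_set L. spi_mult L c (spi_inv L c) \<in> spi_unit L ` bdry L \<and>
                               spi_mult L (spi_inv L c) c \<in> spi_unit L ` bdry L}"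

end

theory Submission
  imports Defs
begin

text \<open>
  For a filter w containing a,
  the filter {n. a n \<in> w} undoes x \<mapsto> a\<cdot>x, so every element of the path groupoid comes
  from a triple. If a\<cdot>x = a'\<cdot>x', directedness of this filter gives a common refinement
  x = u\<cdot>z, x' = v\<cdot>z with a u = a' v; when moreover d(a) - d(b) = d(a') - d(b'), the paths
  b u and b' v lie in the same filter b\<cdot>x and have the same degree, so they coincide.
  Hence Spielberg's relation is exactly the kernel of the map, which is therefore a well
  defined bijection, and it respects composability, products and inverses.

  For the topologies, the image of a basic set [a, b, E] is a basic open set of the path
  groupoid built from cylinder sets. Conversely, finite alignment makes the condition
  l \<in> a\<cdot>z equivalent to z meeting a finite set, so z \<mapsto> a\<cdot>z is continuous into the
  product topology, and every cylinder neighbourhood of a filter contains one of Spielberg's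
  basic sets. The boundary statement is the restriction of this isomorphism, as both
  reductions ask the range and source to lie in \<partial>\<Lambda>.
\<close>

lemma diff_eq_diff_if_add_eq_add:
  fixes a b a' b' g g' :: "'q::group_add"
  assumes "a + g = a' + g'" and "b + g = b' + g'"
  shows "a - b = a' - b'"
proof -
  have "a - b = (a + g) - (b + g)" by (simp only: diff_conv_add_uminus minus_add add.assoc add_minus_cancel)
  also have "\<dots> = (a' + g') - (b' + g')" using assms by (simp only:)
  also have "\<dots> = a' - b'" by (simp only: diff_conv_add_uminus minus_add add.assoc add_minus_cancel)
  finally show ?thesis .
qed

lemma add_eq_add_if_diff_eq_diff:
  fixes a b a' b' m n :: "'q::group_add"
  assumes "a + m = a' + n" and "a - b = a' - b'"
  shows "b + m = b' + n"
proof -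
  have "b + m = - (a - b) + (a + m)" by (simp only: minus_diff_eq add.assoc[symmetric] diff_add_cancel)
  also have "\<dots> = - (a' - b') + (a' + n)" using assms by (simp only:)
  also have "\<dots> = b' + n" by (simp only: minus_diff_eq add.assoc[symmetric] diff_add_cancel)
  finally show ?thesis .
qed

lemma add_diff_add_eq_diff_add_diff:
  fixes a b g h x e :: "'q::group_add"
  assumes "b + x = g + e"
  shows "(a + x) - (h + e) = (a - b) + (g - h)"
proof -
  have "x = - b + (g + e)" using assms by (metis minus_add_cancel)
  then show ?thesis by (simp only: diff_conv_add_uminus minus_add add.assoc add_minus_cancel)
qed

lemma the_in_and_image_if_inj_on:
  assumes "inj_on f A" and "\<exists>e. R e" and "\<And>e. R e \<Longrightarrow> e \<in> A \<and> f e = v"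
  shows "(THE e. R e) \<in> A \<and> f (THE e. R e) = v"
proof -
  have "\<exists>!e. R e" using assms unfolding inj_on_def by metis
  then show ?thesis using theI' assms(3) by metis
qed

lemma top_groupoid_iso_restrict:
  assumes iso: "top_groupoid_iso X G cG mG iG Y H cH mH iH f"
    and "G' \<subseteq> G" and "G' \<subseteq> topspace X" and "f ` G' = H'"
  shows "top_groupoid_iso (subtopology X G') G' cG mG iG (subtopology Y H') H' cH mH iH f"
proof -
  have homeo: "homeomorphic_map X Y f" and "bij_betw f G H" using iso unfolding top_groupoid_iso_def by auto
  then have "bij_betw f G' H'" using assms(2,4) by (meson bij_betw_subset)
  moreover have "f ` (topspace X \<inter> G') = topspace Y \<inter> H'"
    using assms(3,4) homeomorphic_imp_surjective_map[OF homeo] by auto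
  then have "homeomorphic_map (subtopology X G') (subtopology Y H') f"
    by (rule homeomorphic_map_subtopologies[OF homeo])
  ultimately show ?thesis using iso assms(2) unfolding top_groupoid_iso_def by blast
qed

lemma openin_preimage_generate_topology_on:
  assumes "generate_topology_on S U" and "\<And>s. s \<in> S \<Longrightarrow> openin X {p \<in> A. f p \<in> s}"
  shows "openin X {p \<in> A. f p \<in> U}"
  using assms(1)
proof induct
  case (Int a b)
  have "{p \<in> A. f p \<in> a \<inter> b} = {p \<in> A. f p \<in> a} \<inter> {p \<in> A. f p \<in> b}" by auto
  then show ?case using Int by auto
next
  case (UN K)
  have "{p \<in> A. f p \<in> \<Union>K} = (\<Union>k\<in>K. {p \<in> A. f p \<in> k})" by auto
  then show ?case using UN by auto
qed (use assms(2) in auto)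

lemma openin_image_generate_topology_on:
  assumes "generate_topology_on S U" and "inj_on f A" and "\<And>s. s \<in> S \<Longrightarrow> openin Y (f ` (s \<inter> A))"
  shows "openin Y (f ` (U \<inter> A))"
  using assms(1)
proof induct
  case (Int a b)
  have "f ` ((a \<inter> b) \<inter> A) = f ` (a \<inter> A) \<inter> f ` (b \<inter> A)" using assms(2) by (auto simp: inj_on_def)
  then show ?case using Int by auto
next
  case (UN K)
  have "f ` (\<Union>K \<inter> A) = (\<Union>k\<in>K. f ` (k \<inter> A))" by auto
  then show ?case using UN by auto
qed (use assms(3) in auto)

lemma homeomorphic_map_generated_subtopologies:
  assumes "A \<subseteq> \<Union>SX" and "B \<subseteq> \<Union>SY" and bij: "bij_betw f A B"
    and image_open: "\<And>s. s \<in> SX \<Longrightarrow> openin (subtopology (topology_generated_by SY) B) (f ` (s \<inter> A))"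
    and preimage_open: "\<And>s. s \<in> SY \<Longrightarrow> openin (subtopology (topology_generated_by SX) A) {p \<in> A. f p \<in> s}"
  shows "homeomorphic_map (subtopology (topology_generated_by SX) A) (subtopology (topology_generated_by SY) B) f"
proof -
  let ?X = "subtopology (topology_generated_by SX) A"
  let ?Y = "subtopology (topology_generated_by SY) B"
  have X: "topspace ?X = A" and Y: "topspace ?Y = B" using assms(1,2) by auto
  have inj: "inj_on f A" and im: "f ` A = B" using bij by (auto simp: bij_betw_def)
  show ?thesis
  proof (rule bijective_open_imp_homeomorphic_map)
    show "continuous_map ?X ?Y f"
      unfolding continuous_map_def
    proof (intro conjI allI impI)
      fix V assume "openin ?Y V"
      then obtain U where U: "generate_topology_on SY U" "V = U \<inter> B"
        by (auto simp: openin_subtopology openin_topology_generated_by_iff)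
      have "{x \<in> topspace ?X. f x \<in> V} = {p \<in> A. f p \<in> U}" using X im U(2) by auto
      then show "openin ?X {x \<in> topspace ?X. f x \<in> V}"
        using openin_preimage_generate_topology_on[OF U(1) preimage_open] by simp
    qed (use X Y im in auto)
    show "open_map ?X ?Y f" unfolding open_map_def
      using openin_image_generate_topology_on[OF _ inj image_open]
      by (auto simp: openin_subtopology openin_topology_generated_by_iff)
  qed (use X Y im inj in auto)
qed

section \<open>Paths and filters\<close>

locale pgraph =
  fixes P :: "'q::group_add set" and L :: "('a, 'q) pgraph"
  assumes is_pgraph: "is_pgraph P L"
begin

lemma obj_mor: "v \<in> Obj L \<Longrightarrow> v \<in> Mor L"
  and rng_obj: "l \<in> Mor L \<Longrightarrow> rng L l \<in> Obj L"
  and src_obj: "l \<in> Mor L \<Longrightarrow> src L l \<in> Obj L"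
  and obj_rng: "v \<in> Obj L \<Longrightarrow> rng L v = v"
  and obj_src: "v \<in> Obj L \<Longrightarrow> src L v = v"
  and cmp_rng [simp]: "l \<in> Mor L \<Longrightarrow> cmp L (rng L l) l = l"
  and cmp_src [simp]: "l \<in> Mor L \<Longrightarrow> cmp L l (src L l) = l"
  and deg_in_P: "l \<in> Mor L \<Longrightarrow> deg L l \<in> P"
  using is_pgraph by (auto simp: is_pgraph_def)

lemma cmp_mor: "l \<in> Mor L \<Longrightarrow> m \<in> Mor L \<Longrightarrow> src L l = rng L m \<Longrightarrow> cmp L l m \<in> Mor L"
  and rng_cmp [simp]: "l \<in> Mor L \<Longrightarrow> m \<in> Mor L \<Longrightarrow> src L l = rng L m \<Longrightarrow> rng L (cmp L l m) = rng L l"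
  and src_cmp [simp]: "l \<in> Mor L \<Longrightarrow> m \<in> Mor L \<Longrightarrow> src L l = rng L m \<Longrightarrow> src L (cmp L l m) = src L m"
  and deg_cmp: "l \<in> Mor L \<Longrightarrow> m \<in> Mor L \<Longrightarrow> src L l = rng L m \<Longrightarrow> deg L (cmp L l m) = deg L l + deg L m"
  using is_pgraph by (auto simp: is_pgraph_def)

lemma cmp_assoc:
  "l \<in> Mor L \<Longrightarrow> m \<in> Mor L \<Longrightarrow> n \<in> Mor L \<Longrightarrow> src L l = rng L m \<Longrightarrow> src L m = rng L n \<Longrightarrow>
   cmp L (cmp L l m) n = cmp L l (cmp L m n)"
  using is_pgraph unfolding is_pgraph_def by blast

lemma unique_factorisation:
  "l \<in> Mor L \<Longrightarrow> p \<in> P \<Longrightarrow> q \<in> P \<Longrightarrow> deg L l = p + q \<Longrightarrow>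
   \<exists>!(m, n). m \<in> Mor L \<and> n \<in> Mor L \<and> src L m = rng L n \<and> cmp L m n = l \<and> deg L m = p \<and> deg L n = q"
  using is_pgraph unfolding is_pgraph_def by blast

lemma rng_mor: "l \<in> Mor L \<Longrightarrow> rng L l \<in> Mor L"
  and src_mor: "l \<in> Mor L \<Longrightarrow> src L l \<in> Mor L"
  using obj_mor rng_obj src_obj by blast+

lemma src_rng [simp]: "l \<in> Mor L \<Longrightarrow> src L (rng L l) = rng L l"
  and rng_src [simp]: "l \<in> Mor L \<Longrightarrow> rng L (src L l) = src L l"
  using obj_src rng_obj obj_rng src_obj by blast+

lemma factorisation_unique:
  assumes "m \<in> Mor L" "n \<in> Mor L" "m' \<in> Mor L" "n' \<in> Mor L" "src L m = rng L n" "src L m' = rng L n'"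
    and "cmp L m n = cmp L m' n'" and "deg L m = deg L m'"
  shows "m = m' \<and> n = n'"
proof -
  let ?l = "cmp L m n"
  have d: "deg L ?l = deg L m + deg L n" using assms deg_cmp by blast
  moreover have "deg L ?l = deg L m' + deg L n'" using assms(3,4,6,7) deg_cmp by simp
  ultimately have dn: "deg L n' = deg L n" using assms(8) by simp
  have "\<exists>!(a, b). a \<in> Mor L \<and> b \<in> Mor L \<and> src L a = rng L b \<and> cmp L a b = ?l \<and>
      deg L a = deg L m \<and> deg L b = deg L n"
    using unique_factorisation[OF cmp_mor deg_in_P deg_in_P d] assms by blast
  then have "(m, n) = (m', n')"
    by (rule Uniq_D[OF ex1_iff_ex_Uniq[THEN iffD1, THEN conjunct2]]) (use assms dn in auto)
  then show ?thesis by simp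
qed

end

context pgraph
begin

lemma cmp_left_cancel:
  "a \<in> Mor L \<Longrightarrow> m \<in> Mor L \<Longrightarrow> n \<in> Mor L \<Longrightarrow> src L a = rng L m \<Longrightarrow> src L a = rng L n \<Longrightarrow>
   cmp L a m = cmp L a n \<Longrightarrow> m = n"
  using factorisation_unique[of a m a n] by auto

lemma pre_iff: "pre L m l \<longleftrightarrow> m \<in> Mor L \<and> (\<exists>n\<in>Mor L. src L m = rng L n \<and> l = cmp L m n)"
  unfolding pre_def ext_def by auto

lemma pre_mor: assumes "pre L m l" shows "m \<in> Mor L" "l \<in> Mor L"
  using assms cmp_mor unfolding pre_iff by auto

lemma pre_refl: assumes "l \<in> Mor L" shows "pre L l l"
  unfolding pre_iff using assms by (intro conjI bexI[of _ "src L l"]) (simp_all add: src_mor)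

lemma rng_pre: assumes "l \<in> Mor L" shows "pre L (rng L l) l"
  unfolding pre_iff using assms by (intro conjI bexI[of _ l]) (simp_all add: rng_mor)

lemma pre_cmp: "a \<in> Mor L \<Longrightarrow> n \<in> Mor L \<Longrightarrow> src L a = rng L n \<Longrightarrow> pre L a (cmp L a n)"
  unfolding pre_iff by blast

lemma pre_rng: "pre L m l \<Longrightarrow> rng L l = rng L m"
  unfolding pre_iff by auto

lemma pre_trans: assumes "pre L a b" "pre L b c" shows "pre L a c"
proof -
  obtain n where n: "n \<in> Mor L" "src L a = rng L n" "b = cmp L a n" "a \<in> Mor L"
    using assms(1) pre_iff by blast
  obtain k where k: "k \<in> Mor L" "src L b = rng L k" "c = cmp L b k"
    using assms(2) pre_iff by blast
  have nk: "src L n = rng L k" using k(2) n src_cmp[OF n(4) n(1) n(2)] by simp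
  have "c = cmp L (cmp L a n) k" using k(3) n(3) by simp
  also have "\<dots> = cmp L a (cmp L n k)" by (rule cmp_assoc[OF n(4) n(1) k(1) n(2) nk])
  finally have c: "c = cmp L a (cmp L n k)" .
  have "cmp L n k \<in> Mor L" by (rule cmp_mor[OF n(1) k(1) nk])
  moreover have "rng L (cmp L n k) = src L a" using rng_cmp[OF n(1) k(1) nk] n(2) by simp
  ultimately show ?thesis unfolding pre_iff using n(4) c by metis
qed

lemma pre_cmp_left_mono:
  assumes "pre L g k" "a \<in> Mor L" "src L a = rng L g"
  shows "pre L (cmp L a g) (cmp L a k)"
proof -
  obtain n where n: "n \<in> Mor L" "src L g = rng L n" "k = cmp L g n" "g \<in> Mor L"
    using assms(1) pre_iff by blast
  have "cmp L a k = cmp L (cmp L a g) n" using cmp_assoc[OF assms(2) n(4) n(1) assms(3) n(2)] n(3) by simp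
  moreover have "cmp L a g \<in> Mor L" by (rule cmp_mor[OF assms(2) n(4) assms(3)])
  moreover have "src L (cmp L a g) = rng L n" using src_cmp[OF assms(2) n(4) assms(3)] n(2) by simp
  ultimately show ?thesis unfolding pre_iff using n(1) by metis
qed

lemma pre_cmp_left_cancel:
  assumes "a \<in> Mor L" "n \<in> Mor L" "g \<in> Mor L" "src L a = rng L n" "src L a = rng L g"
    and "pre L (cmp L a n) (cmp L a g)"
  shows "pre L n g"
proof -
  obtain k where k: "k \<in> Mor L" "src L (cmp L a n) = rng L k" "cmp L a g = cmp L (cmp L a n) k"
    using assms(6) pre_iff by blast
  have nk: "src L n = rng L k" using k(2) src_cmp[OF assms(1) assms(2) assms(4)] by simp
  have "cmp L a g = cmp L a (cmp L n k)" using cmp_assoc[OF assms(1) assms(2) k(1) assms(4) nk] k(3) by simp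
  moreover have "cmp L n k \<in> Mor L" by (rule cmp_mor[OF assms(2) k(1) nk])
  moreover have "src L a = rng L (cmp L n k)" using rng_cmp[OF assms(2) k(1) nk] assms(4) by simp
  ultimately have "g = cmp L n k" using cmp_left_cancel[OF assms(1) assms(3) _ assms(5)] by blast
  then show ?thesis unfolding pre_iff using assms(2) k(1) nk by blast
qed

lemma filter_mor: "is_filter L x \<Longrightarrow> l \<in> x \<Longrightarrow> l \<in> Mor L"
  and filter_hereditary: "is_filter L x \<Longrightarrow> l \<in> x \<Longrightarrow> pre L m l \<Longrightarrow> m \<in> x"
  and filter_directed: "is_filter L x \<Longrightarrow> l \<in> x \<Longrightarrow> m \<in> x \<Longrightarrow> \<exists>k\<in>x. pre L l k \<and> pre L m k"
  and filter_nonempty: "is_filter L x \<Longrightarrow> \<exists>l. l \<in> x"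
  unfolding is_filter_def by blast+

lemma filter_rng_eq: assumes "is_filter L x" "l \<in> x" "m \<in> x" shows "rng L l = rng L m"
proof -
  obtain k where "pre L l k" "pre L m k" using filter_directed[OF assms] by blast
  then show ?thesis using pre_rng by metis
qed

lemma
  assumes "is_filter L x"
  shows frng_in_Obj: "frng L x \<in> Obj L"
    and frng_mem: "frng L x \<in> x"
    and rng_eq_frng: "l \<in> x \<Longrightarrow> rng L l = frng L x"
proof -
  obtain l where l: "l \<in> x" using filter_nonempty assms by blast
  have lM: "l \<in> Mor L" using filter_mor assms l by blast
  have "frng L x = rng L l" unfolding frng_def
  proof (rule the_equality)
    show "rng L l \<in> Obj L \<and> rng L l \<in> x" using filter_hereditary[OF assms l rng_pre[OF lM]] rng_obj[OF lM] by blast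
    show "v = rng L l" if "v \<in> Obj L \<and> v \<in> x" for v
      using filter_rng_eq[OF assms _ l, of v] obj_rng[of v] that by simp
  qed
  then show "frng L x \<in> Obj L" "frng L x \<in> x" "l' \<in> x \<Longrightarrow> rng L l' = frng L x" for l'
    using filter_hereditary[OF assms l rng_pre[OF lM]] rng_obj[OF lM] filter_rng_eq[OF assms _ l] by auto
qed

lemma frng_eq: "is_filter L x \<Longrightarrow> v \<in> Obj L \<Longrightarrow> v \<in> x \<Longrightarrow> frng L x = v"
  using rng_eq_frng[of x v] obj_rng[of v] by simp

lemma filter_deg_unique: assumes "is_filter L x" "l \<in> x" "m \<in> x" "deg L l = deg L m" shows "l = m"
proof -
  obtain k where "k \<in> x" "pre L l k" "pre L m k" using filter_directed assms by blast
  then obtain n n' where "n \<in> Mor L" "src L l = rng L n" "k = cmp L l n" "l \<in> Mor L"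
    "n' \<in> Mor L" "src L m = rng L n'" "k = cmp L m n'" "m \<in> Mor L"
    unfolding pre_iff by blast
  then show ?thesis using factorisation_unique[of l n m n'] assms(4) by auto
qed

lemma seg_eq: assumes "is_filter L x" "l \<in> x" shows "seg L x (deg L l) = l"
  unfolding seg_def
proof (rule the_equality)
  show "m = l" if "m \<in> x \<and> deg L m = deg L l" for m
    using filter_deg_unique[OF assms(1) _ assms(2)] that by blast
qed (use assms in simp)

lemma seg_mem: assumes "is_filter L x" "in_dom L x m" shows "seg L x m \<in> x" "deg L (seg L x m) = m"
  using assms seg_eq unfolding in_dom_def by auto

end

text \<open>For a \<in> w this is w with the initial segment a removed; the paper's x\<cdot>m is
  fstrip L (x(0,m)) x.\<close>

definition fstrip :: "('a, 'q) pgraph \<Rightarrow> 'a \<Rightarrow> 'a set \<Rightarrow> 'a set" where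
  "fstrip L a w = {n \<in> Mor L. src L a = rng L n \<and> cmp L a n \<in> w}"

lemma fshift_eq_fstrip: "fshift L w m = fstrip L (seg L w m) w"
  unfolding fshift_def fstrip_def ..

lemma mem_fcat_iff: "z \<in> fcat L a y \<longleftrightarrow> (\<exists>g\<in>y. src L a = rng L g \<and> pre L z (cmp L a g))"
  unfolding fcat_def by simp

lemma mem_fstrip_iff: "n \<in> fstrip L a w \<longleftrightarrow> n \<in> Mor L \<and> src L a = rng L n \<and> cmp L a n \<in> w"
  unfolding fstrip_def by simp

context pgraph
begin

lemma cmp_mem_fcat:
  assumes "is_filter L y" "a \<in> Mor L" "src L a = frng L y" "g \<in> y"
  shows "cmp L a g \<in> fcat L a y"
proof -
  have "src L a = rng L g" using rng_eq_frng[OF assms(1,4)] assms(3) by simp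
  then show ?thesis
    unfolding mem_fcat_iff using assms(4) pre_refl cmp_mor assms(2) filter_mor[OF assms(1,4)] by blast
qed

lemma mem_fcat_self:
  assumes "is_filter L y" "a \<in> Mor L" "src L a = frng L y"
  shows "a \<in> fcat L a y"
  using cmp_mem_fcat[OF assms frng_mem[OF assms(1)]] cmp_src[OF assms(2)] assms(3) by simp

lemma is_filter_fcat:
  assumes "is_filter L y" "a \<in> Mor L" "src L a = frng L y"
  shows "is_filter L (fcat L a y)"
  unfolding is_filter_def
proof (intro conjI ballI allI impI)
  show "fcat L a y \<subseteq> Mor L" unfolding fcat_def using pre_mor by blast
  show "fcat L a y \<noteq> {}" using mem_fcat_self[OF assms] by blast
next
  fix l m assume "l \<in> fcat L a y" and "pre L m l"
  then show "m \<in> fcat L a y" unfolding mem_fcat_iff using pre_trans by blast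
next
  fix l m assume "l \<in> fcat L a y" and "m \<in> fcat L a y"
  then obtain g1 g2 where g: "g1 \<in> y" "src L a = rng L g1" "pre L l (cmp L a g1)"
      "g2 \<in> y" "src L a = rng L g2" "pre L m (cmp L a g2)"
    unfolding mem_fcat_iff by blast
  obtain k where k: "k \<in> y" "pre L g1 k" "pre L g2 k" using filter_directed[OF assms(1) g(1) g(4)] by blast
  have "pre L l (cmp L a k)" "pre L m (cmp L a k)"
    using pre_cmp_left_mono[OF k(2) assms(2) g(2)] pre_cmp_left_mono[OF k(3) assms(2) g(5)] g pre_trans
    by blast+
  then show "\<exists>k\<in>fcat L a y. pre L l k \<and> pre L m k" using cmp_mem_fcat[OF assms k(1)] by blast
qed

lemma frng_fcat:
  assumes "is_filter L y" "a \<in> Mor L" "src L a = frng L y"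
  shows "frng L (fcat L a y) = rng L a"
  using rng_eq_frng[OF is_filter_fcat[OF assms] mem_fcat_self[OF assms]] by simp

lemma fstrip_fcat:
  assumes "is_filter L y" "a \<in> Mor L" "src L a = frng L y"
  shows "fstrip L a (fcat L a y) = y"
proof (intro set_eqI iffI)
  fix n assume "n \<in> fstrip L a (fcat L a y)"
  then have n: "n \<in> Mor L" "src L a = rng L n" "cmp L a n \<in> fcat L a y" unfolding mem_fstrip_iff by auto
  then obtain g where g: "g \<in> y" "src L a = rng L g" "pre L (cmp L a n) (cmp L a g)"
    unfolding mem_fcat_iff by blast
  have "pre L n g" using pre_cmp_left_cancel[OF assms(2) n(1) filter_mor[OF assms(1) g(1)] n(2) g(2,3)] .
  then show "n \<in> y" using filter_hereditary[OF assms(1) g(1)] by blast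
next
  fix n assume n: "n \<in> y"
  then show "n \<in> fstrip L a (fcat L a y)"
    unfolding mem_fstrip_iff using cmp_mem_fcat[OF assms n] filter_mor[OF assms(1) n]
      rng_eq_frng[OF assms(1) n] assms(3) by simp
qed

lemma cmp_mem_fcat_iff:
  assumes "is_filter L y" "a \<in> Mor L" "src L a = frng L y" "g \<in> Mor L" "src L a = rng L g"
  shows "cmp L a g \<in> fcat L a y \<longleftrightarrow> g \<in> y"
proof -
  have "g \<in> fstrip L a (fcat L a y) \<longleftrightarrow> cmp L a g \<in> fcat L a y"
    using assms(4,5) by (simp add: mem_fstrip_iff)
  then show ?thesis using fstrip_fcat[OF assms(1-3)] by simp
qed

lemma
  assumes "is_filter L w" "a \<in> w"
  shows is_filter_fstrip: "is_filter L (fstrip L a w)"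
    and frng_fstrip: "frng L (fstrip L a w) = src L a"
proof -
  have aM: "a \<in> Mor L" using filter_mor assms by blast
  have src_mem: "src L a \<in> fstrip L a w"
    unfolding mem_fstrip_iff using src_mor[OF aM] rng_src[OF aM] cmp_src[OF aM] assms(2) by simp
  show filter: "is_filter L (fstrip L a w)"
    unfolding is_filter_def
  proof (intro conjI ballI allI impI)
    show "fstrip L a w \<subseteq> Mor L" unfolding fstrip_def by blast
    show "fstrip L a w \<noteq> {}" using src_mem by blast
  next
    fix l m assume l: "l \<in> fstrip L a w" and m: "pre L m l"
    have l': "src L a = rng L l" "cmp L a l \<in> w" using l unfolding mem_fstrip_iff by auto
    have r: "src L a = rng L m" using pre_rng[OF m] l'(1) by simp
    have "cmp L a m \<in> w" using filter_hereditary[OF assms(1) l'(2) pre_cmp_left_mono[OF m aM r]] .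
    then show "m \<in> fstrip L a w" unfolding mem_fstrip_iff using pre_mor[OF m] r by blast
  next
    fix n1 n2 assume "n1 \<in> fstrip L a w" and "n2 \<in> fstrip L a w"
    then have n: "n1 \<in> Mor L" "src L a = rng L n1" "cmp L a n1 \<in> w"
        "n2 \<in> Mor L" "src L a = rng L n2" "cmp L a n2 \<in> w"
      unfolding mem_fstrip_iff by auto
    obtain k where k: "k \<in> w" "pre L (cmp L a n1) k" "pre L (cmp L a n2) k"
      using filter_directed[OF assms(1) n(3) n(6)] by blast
    have "pre L a k" using pre_trans[OF pre_cmp[OF aM n(1,2)] k(2)] .
    then obtain m where m: "m \<in> Mor L" "src L a = rng L m" "k = cmp L a m" unfolding pre_iff by blast
    have "m \<in> fstrip L a w" unfolding mem_fstrip_iff using m k(1) by simp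
    moreover have "pre L n1 m" "pre L n2 m"
      using pre_cmp_left_cancel[OF aM n(1) m(1) n(2) m(2)] pre_cmp_left_cancel[OF aM n(4) m(1) n(5) m(2)]
        k m(3) by simp_all
    ultimately show "\<exists>k\<in>fstrip L a w. pre L n1 k \<and> pre L n2 k" by blast
  qed
  show "frng L (fstrip L a w) = src L a" using frng_eq[OF filter src_obj[OF aM] src_mem] .
qed

lemma fcat_fstrip:
  assumes "is_filter L w" "a \<in> w"
  shows "fcat L a (fstrip L a w) = w"
proof (intro set_eqI iffI)
  fix z assume "z \<in> fcat L a (fstrip L a w)"
  then obtain g where "g \<in> fstrip L a w" "pre L z (cmp L a g)" unfolding mem_fcat_iff by blast
  then show "z \<in> w" using filter_hereditary[OF assms(1)] by (auto simp: mem_fstrip_iff)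
next
  fix z assume z: "z \<in> w"
  obtain k where k: "k \<in> w" "pre L a k" "pre L z k" using filter_directed[OF assms z] by blast
  obtain n where n: "n \<in> Mor L" "src L a = rng L n" "k = cmp L a n" using k(2) pre_iff by blast
  then have "n \<in> fstrip L a w" unfolding mem_fstrip_iff using k(1) by simp
  then show "z \<in> fcat L a (fstrip L a w)" unfolding mem_fcat_iff using n k(3) by blast
qed

lemma fstrip_fstrip:
  assumes "a \<in> Mor L" "u \<in> Mor L" "src L a = rng L u"
  shows "fstrip L u (fstrip L a w) = fstrip L (cmp L a u) w"
proof (intro set_eqI iffI)
  fix n assume "n \<in> fstrip L u (fstrip L a w)"
  then have n: "n \<in> Mor L" "src L u = rng L n" "cmp L a (cmp L u n) \<in> w" unfolding mem_fstrip_iff by auto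
  then show "n \<in> fstrip L (cmp L a u) w"
    unfolding mem_fstrip_iff using cmp_assoc[OF assms(1,2) n(1) assms(3) n(2)] assms by simp
next
  fix n assume "n \<in> fstrip L (cmp L a u) w"
  then have n: "n \<in> Mor L" "src L (cmp L a u) = rng L n" "cmp L (cmp L a u) n \<in> w" unfolding mem_fstrip_iff by auto
  have s: "src L u = rng L n" using n(2) assms by simp
  show "n \<in> fstrip L u (fstrip L a w)"
    unfolding mem_fstrip_iff using cmp_assoc[OF assms(1,2) n(1) assms(3) s] cmp_mor[OF assms(2) n(1) s] n s assms
    by simp
qed

lemma fcat_cmp:
  assumes "is_filter L y" "a \<in> Mor L" "g \<in> Mor L" "src L a = rng L g" "src L g = frng L y"
  shows "fcat L (cmp L a g) y = fcat L a (fcat L g y)"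
proof (intro set_eqI iffI)
  fix z assume "z \<in> fcat L (cmp L a g) y"
  then obtain c where c: "c \<in> y" "src L (cmp L a g) = rng L c" "pre L z (cmp L (cmp L a g) c)"
    unfolding mem_fcat_iff by blast
  have cM: "c \<in> Mor L" using filter_mor assms(1) c(1) by blast
  have s: "src L g = rng L c" using c(2) assms by simp
  have "cmp L g c \<in> fcat L g y" using cmp_mem_fcat[OF assms(1,3,5) c(1)] .
  moreover have "src L a = rng L (cmp L g c)" using assms(3,4) cM s by simp
  moreover have "cmp L (cmp L a g) c = cmp L a (cmp L g c)" by (rule cmp_assoc[OF assms(2,3) cM assms(4) s])
  ultimately show "z \<in> fcat L a (fcat L g y)" unfolding mem_fcat_iff[of z L a] using c(3) by metis
next
  fix z assume "z \<in> fcat L a (fcat L g y)"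
  then obtain d where d: "d \<in> fcat L g y" "src L a = rng L d" "pre L z (cmp L a d)"
    unfolding mem_fcat_iff[of z L a] by blast
  then obtain c where c: "c \<in> y" "src L g = rng L c" "pre L d (cmp L g c)" unfolding mem_fcat_iff by blast
  have cM: "c \<in> Mor L" using filter_mor assms(1) c(1) by blast
  have "pre L (cmp L a d) (cmp L a (cmp L g c))" using pre_cmp_left_mono[OF c(3) assms(2) d(2)] .
  then have "pre L z (cmp L (cmp L a g) c)"
    using cmp_assoc[OF assms(2,3) cM assms(4) c(2)] pre_trans d(3) by metis
  moreover have "src L (cmp L a g) = rng L c" using assms(2,3,4) c(2) by simp
  ultimately show "z \<in> fcat L (cmp L a g) y" unfolding mem_fcat_iff using c(1) by blast
qed

lemma fstrip_frng: assumes "is_filter L x" shows "fstrip L (frng L x) x = x"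
proof -
  have v: "frng L x \<in> Obj L" using frng_in_Obj[OF assms] .
  have "n \<in> Mor L \<and> frng L x = rng L n \<and> cmp L (frng L x) n \<in> x \<longleftrightarrow> n \<in> x" for n
    using filter_mor[OF assms] rng_eq_frng[OF assms] cmp_rng by metis
  then show ?thesis unfolding fstrip_def obj_src[OF v] by blast
qed

lemma fcat_frng: assumes "is_filter L x" shows "fcat L (frng L x) x = x"
  using fcat_fstrip[OF assms frng_mem[OF assms]] fstrip_frng[OF assms] by simp

end

section \<open>Spielberg's groupoid and the path groupoid\<close>

definition tri_to_pg :: "('a, 'q::group_add) pgraph \<Rightarrow> 'a \<times> 'a \<times> 'a set \<Rightarrow> 'a set \<times> 'q \<times> 'a set" where
  "tri_to_pg L t = (case t of (a, b, x) \<Rightarrow> (fcat L a x, deg L a - deg L b, fcat L b x))"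

lemma tri_to_pg_simp [simp]: "tri_to_pg L (a, b, x) = (fcat L a x, deg L a - deg L b, fcat L b x)"
  unfolding tri_to_pg_def by simp

text \<open>The choice is harmless: \<^const>\<open>spi_rel\<close> is the kernel of \<^const>\<open>tri_to_pg\<close>
  (lemma spi_rel_eq_kernel).\<close>

definition spi_to_pg :: "('a, 'q::group_add) pgraph \<Rightarrow> ('a \<times> 'a \<times> 'a set) set \<Rightarrow> 'a set \<times> 'q \<times> 'a set" where
  "spi_to_pg L c = tri_to_pg L (SOME t. t \<in> c)"

lemma mem_spi_tri_iff:
  "(a, b, x) \<in> spi_tri L \<longleftrightarrow>
     a \<in> Mor L \<and> b \<in> Mor L \<and> is_filter L x \<and> src L a = frng L x \<and> src L b = frng L x"
  unfolding spi_tri_def filters_def by simp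

context pgraph
begin

lemma in_dom_fcat:
  assumes "is_filter L x" "a \<in> Mor L" "src L a = frng L x"
  shows "in_dom L (fcat L a x) (deg L a)"
  unfolding in_dom_def using mem_fcat_self[OF assms] by blast

lemma fshift_fcat:
  assumes "is_filter L x" "a \<in> Mor L" "src L a = frng L x"
  shows "fshift L (fcat L a x) (deg L a) = x"
  unfolding fshift_eq_fstrip seg_eq[OF is_filter_fcat[OF assms] mem_fcat_self[OF assms]]
  using fstrip_fcat[OF assms] .

lemma tri_to_pg_fstrip:
  assumes "is_filter L x" "is_filter L y" "a \<in> x" "b \<in> y" "fstrip L a x = fstrip L b y"
  shows "(a, b, fstrip L a x) \<in> spi_tri L" "tri_to_pg L (a, b, fstrip L a x) = (x, deg L a - deg L b, y)"
proof -
  have "src L b = frng L (fstrip L a x)"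
    using frng_fstrip[OF assms(2,4)] assms(5) by simp
  then show "(a, b, fstrip L a x) \<in> spi_tri L"
    unfolding mem_spi_tri_iff
    using filter_mor[OF assms(1,3)] filter_mor[OF assms(2,4)] is_filter_fstrip[OF assms(1,3)]
      frng_fstrip[OF assms(1,3)] by simp
  show "tri_to_pg L (a, b, fstrip L a x) = (x, deg L a - deg L b, y)"
    using fcat_fstrip[OF assms(1,3)] fcat_fstrip[OF assms(2,4)] assms(5) by simp
qed

lemma fcat_eq_common_refinement:
  assumes y: "is_filter L y" and y': "is_filter L y'" and g: "g \<in> Mor L" and h: "h \<in> Mor L"
    and gy: "src L g = frng L y" and hy': "src L h = frng L y'" and eq: "fcat L g y = fcat L h y'"
  obtains z u v where "is_filter L z" "u \<in> Mor L" "v \<in> Mor L" "src L g = rng L u" "src L h = rng L v"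
    "cmp L g u = cmp L h v" "src L u = frng L z" "src L v = frng L z" "y = fcat L u z" "y' = fcat L v z"
proof -
  define X where "X = fcat L g y"
  have X: "is_filter L X" "g \<in> X" "h \<in> X"
    using is_filter_fcat[OF y g gy] mem_fcat_self[OF y g gy] mem_fcat_self[OF y' h hy'] eq X_def by auto
  obtain k where k: "k \<in> X" "pre L g k" "pre L h k" using filter_directed[OF X] by blast
  obtain u where u: "u \<in> Mor L" "src L g = rng L u" "k = cmp L g u" using k(2) pre_iff by blast
  obtain v where v: "v \<in> Mor L" "src L h = rng L v" "k = cmp L h v" using k(3) pre_iff by blast
  define z where "z = fstrip L k X"
  have z: "is_filter L z" "frng L z = src L k"
    unfolding z_def using is_filter_fstrip[OF X(1) k(1)] frng_fstrip[OF X(1) k(1)] by auto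
  have yX: "y = fstrip L g X" and y'X: "y' = fstrip L h X"
    using fstrip_fcat[OF y g gy] fstrip_fcat[OF y' h hy'] eq X_def by auto
  have uv: "u \<in> y" "v \<in> y'" unfolding yX y'X mem_fstrip_iff using u v k(1) by auto
  have "fstrip L u y = z" "fstrip L v y' = z"
    unfolding z_def yX y'X using fstrip_fstrip[OF g u(1) u(2)] fstrip_fstrip[OF h v(1) v(2)] u(3) v(3) by auto
  then have "y = fcat L u z" "y' = fcat L v z"
    using fcat_fstrip[OF y uv(1)] fcat_fstrip[OF y' uv(2)] by auto
  moreover have "src L u = frng L z" "src L v = frng L z"
    using z(2) u(3) v(3) src_cmp[OF g u(1) u(2)] src_cmp[OF h v(1) v(2)] by auto
  ultimately show ?thesis using that[OF z(1) u(1) v(1) u(2) v(2)] u(3) v(3) by auto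
qed

lemma tri_to_pg_eq_if_spi_rel:
  assumes "(s, t) \<in> spi_rel L"
  shows "tri_to_pg L s = tri_to_pg L t"
proof -
  obtain a b x a' b' x' y g g' where st: "s = (a, b, x)" "t = (a', b', x')"
    and tri: "(a, b, x) \<in> spi_tri L" "(a', b', x') \<in> spi_tri L"
    and y: "is_filter L y" and g: "g \<in> Mor L" "g' \<in> Mor L" "src L g = frng L y" "src L g' = frng L y"
    and ag: "src L a = rng L g" "src L a' = rng L g'"
    and x: "x = fcat L g y" "x' = fcat L g' y"
    and eq: "cmp L a g = cmp L a' g'" "cmp L b g = cmp L b' g'"
    using assms unfolding spi_rel_def filters_def by auto
  have ab: "a \<in> Mor L" "b \<in> Mor L" "a' \<in> Mor L" "b' \<in> Mor L" using tri by (auto simp: mem_spi_tri_iff)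
  have bg: "src L b = rng L g" "src L b' = rng L g'"
    using tri x frng_fcat[OF y g(1,3)] frng_fcat[OF y g(2,4)] by (auto simp: mem_spi_tri_iff)
  have "fcat L a x = fcat L a' x'" "fcat L b x = fcat L b' x'"
    using fcat_cmp[OF y ab(1) g(1) ag(1) g(3)] fcat_cmp[OF y ab(3) g(2) ag(2) g(4)]
      fcat_cmp[OF y ab(2) g(1) bg(1) g(3)] fcat_cmp[OF y ab(4) g(2) bg(2) g(4)] eq x by auto
  moreover have "deg L a - deg L b = deg L a' - deg L b'"
    using diff_eq_diff_if_add_eq_add[of "deg L a" "deg L g" "deg L a'" "deg L g'" "deg L b" "deg L b'"]
      deg_cmp[OF ab(1) g(1) ag(1)] deg_cmp[OF ab(3) g(2) ag(2)]
      deg_cmp[OF ab(2) g(1) bg(1)] deg_cmp[OF ab(4) g(2) bg(2)] eq by simp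
  ultimately show ?thesis unfolding st by simp
qed

lemma spi_rel_if_tri_to_pg_eq:
  assumes t: "(a, b, x) \<in> spi_tri L" and t': "(a', b', x') \<in> spi_tri L"
    and eq: "tri_to_pg L (a, b, x) = tri_to_pg L (a', b', x')"
  shows "((a, b, x), (a', b', x')) \<in> spi_rel L"
proof -
  have t1: "a \<in> Mor L" "b \<in> Mor L" "is_filter L x" "src L a = frng L x" "src L b = frng L x"
    and t2: "a' \<in> Mor L" "b' \<in> Mor L" "is_filter L x'" "src L a' = frng L x'" "src L b' = frng L x'"
    using t t' by (auto simp: mem_spi_tri_iff)
  have e: "fcat L a x = fcat L a' x'" "deg L a - deg L b = deg L a' - deg L b'" "fcat L b x = fcat L b' x'"
    using eq by auto
  obtain z u v where C: "is_filter L z" "u \<in> Mor L" "v \<in> Mor L" "src L a = rng L u" "src L a' = rng L v"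
    "cmp L a u = cmp L a' v" "src L u = frng L z" "src L v = frng L z" "x = fcat L u z" "x' = fcat L v z"
    by (rule fcat_eq_common_refinement[OF t1(3) t2(3) t1(1) t2(1) t1(4) t2(4) e(1)])
  have bu: "src L b = rng L u" "src L b' = rng L v"
    using t1(5) t2(5) C(9,10) frng_fcat[OF C(1,2,7)] frng_fcat[OF C(1,3,8)] by auto
  have "cmp L b u \<in> fcat L b x" "cmp L b' v \<in> fcat L b x"
    using cmp_mem_fcat[OF t1(3) t1(2) t1(5)] cmp_mem_fcat[OF t2(3) t2(2) t2(5)] e(3)
      mem_fcat_self[OF C(1,2,7)] mem_fcat_self[OF C(1,3,8)] C(9,10) by auto
  moreover have "deg L b + deg L u = deg L b' + deg L v"
    using add_eq_add_if_diff_eq_diff[OF _ e(2)] deg_cmp[OF t1(1) C(2) C(4)] deg_cmp[OF t2(1) C(3) C(5)] C(6)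
    by simp
  ultimately have "cmp L b u = cmp L b' v"
    using filter_deg_unique[OF is_filter_fcat[OF t1(3) t1(2) t1(5)]] deg_cmp[OF t1(2) C(2) bu(1)]
      deg_cmp[OF t2(2) C(3) bu(2)] by simp
  then show ?thesis
    unfolding spi_rel_def using t t' C filters_def by blast
qed

lemma spi_rel_eq_kernel:
  "spi_rel L = {(s, t). s \<in> spi_tri L \<and> t \<in> spi_tri L \<and> tri_to_pg L s = tri_to_pg L t}"
proof (intro set_eqI iffI)
  fix st assume "st \<in> spi_rel L"
  moreover have "spi_rel L \<subseteq> spi_tri L \<times> spi_tri L" unfolding spi_rel_def by auto
  ultimately show "st \<in> {(s, t). s \<in> spi_tri L \<and> t \<in> spi_tri L \<and> tri_to_pg L s = tri_to_pg L t}"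
    using tri_to_pg_eq_if_spi_rel by (cases st) auto
next
  fix st assume "st \<in> {(s, t). s \<in> spi_tri L \<and> t \<in> spi_tri L \<and> tri_to_pg L s = tri_to_pg L t}"
  then show "st \<in> spi_rel L" using spi_rel_if_tri_to_pg_eq by (cases st) auto
qed

lemma equiv_spi_rel: "equiv (spi_tri L) (spi_rel L)"
  unfolding spi_rel_eq_kernel by (auto intro!: equivI refl_onI symI transI)

lemma spi_to_pg_spi_cls:
  assumes "(a, b, x) \<in> spi_tri L"
  shows "spi_to_pg L (spi_cls L a b x) = tri_to_pg L (a, b, x)"
proof -
  have "(a, b, x) \<in> spi_cls L a b x"
    using assms equiv_class_self[OF equiv_spi_rel] unfolding spi_cls_def by blast
  then have "(SOME s. s \<in> spi_cls L a b x) \<in> spi_cls L a b x" by (rule someI)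
  then show ?thesis unfolding spi_to_pg_def spi_cls_def spi_rel_eq_kernel using assms by simp
qed

lemma spi_cls_in_spi_set: "(a, b, x) \<in> spi_tri L \<Longrightarrow> spi_cls L a b x \<in> spi_set L"
  unfolding spi_cls_def spi_set_def by (rule quotientI)

lemma spi_set_cases:
  assumes "c \<in> spi_set L"
  obtains a b x where "(a, b, x) \<in> spi_tri L" "c = spi_cls L a b x"
  using assms unfolding spi_set_def spi_cls_def by (auto elim!: quotientE)

lemma spi_cls_eq_iff:
  assumes "(a, b, x) \<in> spi_tri L" "(a', b', x') \<in> spi_tri L"
  shows "spi_cls L a b x = spi_cls L a' b' x' \<longleftrightarrow> tri_to_pg L (a, b, x) = tri_to_pg L (a', b', x')"
  using eq_equiv_class_iff[OF equiv_spi_rel assms] assms unfolding spi_cls_def spi_rel_eq_kernel by blast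

lemma inj_on_spi_to_pg: "inj_on (spi_to_pg L) (spi_set L)"
proof (rule inj_onI)
  fix c d assume "c \<in> spi_set L" "d \<in> spi_set L" "spi_to_pg L c = spi_to_pg L d"
  then show "c = d"
    by (elim spi_set_cases) (simp add: spi_to_pg_spi_cls spi_cls_eq_iff del: tri_to_pg_simp)
qed

lemma tri_to_pg_in_pg_set: assumes "(a, b, x) \<in> spi_tri L" shows "tri_to_pg L (a, b, x) \<in> pg_set P L"
proof -
  have t: "a \<in> Mor L" "b \<in> Mor L" "is_filter L x" "src L a = frng L x" "src L b = frng L x"
    using assms by (auto simp: mem_spi_tri_iff)
  show ?thesis
    unfolding pg_set_def filters_def tri_to_pg_simp
    using is_filter_fcat[OF t(3,1,4)] is_filter_fcat[OF t(3,2,5)] deg_in_P[OF t(1)] deg_in_P[OF t(2)]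
      in_dom_fcat[OF t(3,1,4)] in_dom_fcat[OF t(3,2,5)] fshift_fcat[OF t(3,1,4)] fshift_fcat[OF t(3,2,5)]
    by blast
qed

lemma pg_set_cases:
  assumes "p \<in> pg_set P L"
  obtains a b x where "(a, b, x) \<in> spi_tri L" "p = tri_to_pg L (a, b, x)"
proof -
  obtain x m y n where p: "p = (x, m - n, y)" "is_filter L x" "is_filter L y" "in_dom L x m" "in_dom L y n"
    "fstrip L (seg L x m) x = fstrip L (seg L y n) y"
    using assms unfolding pg_set_def filters_def fshift_eq_fstrip by auto
  note tri_to_pg_fstrip[OF p(2,3) seg_mem(1)[OF p(2,4)] seg_mem(1)[OF p(3,5)] p(6)]
  then show ?thesis using that seg_mem(2) p by metis
qed

lemma spi_to_pg_image: "spi_to_pg L ` spi_set L = pg_set P L"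
proof (intro set_eqI iffI)
  fix p assume "p \<in> spi_to_pg L ` spi_set L"
  then show "p \<in> pg_set P L" by (auto elim!: spi_set_cases simp: spi_to_pg_spi_cls tri_to_pg_in_pg_set
      simp del: tri_to_pg_simp)
next
  fix p assume "p \<in> pg_set P L"
  then show "p \<in> spi_to_pg L ` spi_set L"
    by (elim pg_set_cases) (metis image_eqI spi_cls_in_spi_set spi_to_pg_spi_cls)
qed

lemma bij_betw_spi_to_pg: "bij_betw (spi_to_pg L) (spi_set L) (pg_set P L)"
  unfolding bij_betw_def using inj_on_spi_to_pg spi_to_pg_image by blast

end

definition is_spi_product ::
  "('a, 'q) pgraph \<Rightarrow> ('a \<times> 'a \<times> 'a set) set \<Rightarrow> ('a \<times> 'a \<times> 'a set) set \<Rightarrow> ('a \<times> 'a \<times> 'a set) set \<Rightarrow> bool"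
  where "is_spi_product L c d e \<longleftrightarrow> (\<exists>a b x g h y z xi eta.
      (a, b, x) \<in> spi_tri L \<and> (g, h, y) \<in> spi_tri L \<and>
      c = spi_cls L a b x \<and> d = spi_cls L g h y \<and> fcat L b x = fcat L g y \<and>
      z \<in> filters L \<and> xi \<in> Mor L \<and> eta \<in> Mor L \<and>
      src L xi = frng L z \<and> src L eta = frng L z \<and> src L b = rng L xi \<and> src L g = rng L eta \<and>
      x = fcat L xi z \<and> y = fcat L eta z \<and> cmp L b xi = cmp L g eta \<and>
      e = spi_cls L (cmp L a xi) (cmp L h eta) z)"

context pgraph
begin

lemma spi_comp_iff:
  assumes "c \<in> spi_set L" and "d \<in> spi_set L"
  shows "spi_comp L c d \<longleftrightarrow> pg_comp (spi_to_pg L c) (spi_to_pg L d)"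
proof -
  obtain a b x a' b' y where t: "(a, b, x) \<in> spi_tri L" "c = spi_cls L a b x"
    and t': "(a', b', y) \<in> spi_tri L" "d = spi_cls L a' b' y"
    using assms by (elim spi_set_cases)
  have "spi_comp L c d \<longleftrightarrow> fcat L b x = fcat L a' y"
  proof
    assume "spi_comp L c d"
    then obtain a1 b1 x1 a1' b1' y1 where t1: "(a1, b1, x1) \<in> spi_tri L" "(a1', b1', y1) \<in> spi_tri L"
      "c = spi_cls L a1 b1 x1" "d = spi_cls L a1' b1' y1" "fcat L b1 x1 = fcat L a1' y1"
      unfolding spi_comp_def by blast
    then show "fcat L b x = fcat L a' y"
      using t t' spi_cls_eq_iff[OF t(1) t1(1)] spi_cls_eq_iff[OF t'(1) t1(2)] by simp
  qed (use t t' in \<open>unfold spi_comp_def, blast\<close>)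
  then show ?thesis unfolding pg_comp_def t(2) t'(2) spi_to_pg_spi_cls[OF t(1)] spi_to_pg_spi_cls[OF t'(1)] by simp
qed

lemma spi_mult_candidate:
  assumes t: "(a, b, x) \<in> spi_tri L" and t': "(g, h, y) \<in> spi_tri L"
    and z: "is_filter L z" "xi \<in> Mor L" "eta \<in> Mor L" "src L xi = frng L z" "src L eta = frng L z"
    and r: "src L b = rng L xi" "src L g = rng L eta"
    and x: "x = fcat L xi z" "y = fcat L eta z" and eq: "cmp L b xi = cmp L g eta"
  shows "(cmp L a xi, cmp L h eta, z) \<in> spi_tri L"
    and "tri_to_pg L (cmp L a xi, cmp L h eta, z) = pg_mult (tri_to_pg L (a, b, x)) (tri_to_pg L (g, h, y))"
proof -
  have ab: "a \<in> Mor L" "b \<in> Mor L" "src L a = rng L xi" and gh: "g \<in> Mor L" "h \<in> Mor L" "src L h = rng L eta"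
    using t t' r by (auto simp: mem_spi_tri_iff)
  show "(cmp L a xi, cmp L h eta, z) \<in> spi_tri L"
    unfolding mem_spi_tri_iff using z ab gh cmp_mor by simp
  have "fcat L (cmp L a xi) z = fcat L a x" "fcat L (cmp L h eta) z = fcat L h y"
    using fcat_cmp[OF z(1) ab(1) z(2) ab(3) z(4)] fcat_cmp[OF z(1) gh(2) z(3) gh(3) z(5)] x by auto
  moreover have "deg L b + deg L xi = deg L g + deg L eta"
    using deg_cmp[OF ab(2) z(2) r(1)] deg_cmp[OF gh(1) z(3) r(2)] eq by simp
  then have "deg L (cmp L a xi) - deg L (cmp L h eta) = (deg L a - deg L b) + (deg L g - deg L h)"
    using deg_cmp[OF ab(1) z(2) ab(3)] deg_cmp[OF gh(2) z(3) gh(3)] add_diff_add_eq_diff_add_diff by simp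
  ultimately show "tri_to_pg L (cmp L a xi, cmp L h eta, z) = pg_mult (tri_to_pg L (a, b, x)) (tri_to_pg L (g, h, y))"
    unfolding pg_mult_def by simp
qed

lemma spi_mult_closed_hom:
  assumes c: "c \<in> spi_set L" and d: "d \<in> spi_set L" and cd: "spi_comp L c d"
  shows "spi_mult L c d \<in> spi_set L \<and> spi_to_pg L (spi_mult L c d) = pg_mult (spi_to_pg L c) (spi_to_pg L d)"
  unfolding spi_mult_def is_spi_product_def[symmetric]
proof (rule the_in_and_image_if_inj_on[OF inj_on_spi_to_pg])
  obtain a b x g h y where t: "(a, b, x) \<in> spi_tri L" "(g, h, y) \<in> spi_tri L"
    "c = spi_cls L a b x" "d = spi_cls L g h y" and eq: "fcat L b x = fcat L g y"
    using cd unfolding spi_comp_def by blast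
  have "b \<in> Mor L" "g \<in> Mor L" "is_filter L x" "is_filter L y" "src L b = frng L x" "src L g = frng L y"
    using t by (auto simp: mem_spi_tri_iff)
  from fcat_eq_common_refinement[OF this(3,4,1,2,5,6) eq]
  obtain z xi eta where "is_filter L z" "xi \<in> Mor L" "eta \<in> Mor L" "src L b = rng L xi" "src L g = rng L eta"
    "cmp L b xi = cmp L g eta" "src L xi = frng L z" "src L eta = frng L z" "x = fcat L xi z" "y = fcat L eta z" .
  then show "\<exists>e. is_spi_product L c d e"
    using t eq unfolding is_spi_product_def filters_def by blast
next
  fix e assume "is_spi_product L c d e"
  then obtain a b x g h y z xi eta where t: "(a, b, x) \<in> spi_tri L" "(g, h, y) \<in> spi_tri L"
      "c = spi_cls L a b x" "d = spi_cls L g h y"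
    and z: "is_filter L z" "xi \<in> Mor L" "eta \<in> Mor L" "src L xi = frng L z" "src L eta = frng L z"
    and r: "src L b = rng L xi" "src L g = rng L eta"
    and x: "x = fcat L xi z" "y = fcat L eta z" "cmp L b xi = cmp L g eta"
    and e: "e = spi_cls L (cmp L a xi) (cmp L h eta) z"
    unfolding is_spi_product_def filters_def by blast
  note cand = spi_mult_candidate[OF t(1,2) z r x]
  show "e \<in> spi_set L \<and> spi_to_pg L e = pg_mult (spi_to_pg L c) (spi_to_pg L d)"
    using spi_cls_in_spi_set[OF cand(1)] spi_to_pg_spi_cls[OF cand(1)] cand(2)
      spi_to_pg_spi_cls[OF t(1)] spi_to_pg_spi_cls[OF t(2)] e t(3,4) by simp
qed

lemma spi_inv_closed_hom:
  assumes "c \<in> spi_set L"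
  shows "spi_inv L c \<in> spi_set L \<and> spi_to_pg L (spi_inv L c) = pg_inv (spi_to_pg L c)"
  unfolding spi_inv_def
proof (rule the_in_and_image_if_inj_on[OF inj_on_spi_to_pg])
  show "\<exists>e a b x. (a, b, x) \<in> spi_tri L \<and> c = spi_cls L a b x \<and> e = spi_cls L b a x"
    using assms by (blast elim: spi_set_cases)
next
  fix e assume "\<exists>a b x. (a, b, x) \<in> spi_tri L \<and> c = spi_cls L a b x \<and> e = spi_cls L b a x"
  then obtain a b x where t: "(a, b, x) \<in> spi_tri L" "c = spi_cls L a b x" "e = spi_cls L b a x" by blast
  then have t': "(b, a, x) \<in> spi_tri L" by (auto simp: mem_spi_tri_iff)
  show "e \<in> spi_set L \<and> spi_to_pg L e = pg_inv (spi_to_pg L c)"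
    using spi_cls_in_spi_set[OF t'] spi_to_pg_spi_cls[OF t'] spi_to_pg_spi_cls[OF t(1)] t(2,3)
    by (simp add: pg_inv_def minus_diff_eq)
qed

lemma
  assumes "is_filter L z"
  shows spi_unit_in_spi_set: "spi_unit L z \<in> spi_set L"
    and spi_to_pg_spi_unit: "spi_to_pg L (spi_unit L z) = (z, 0, z)"
proof -
  have o: "frng L z \<in> Obj L" using frng_in_Obj[OF assms] .
  have t: "(frng L z, frng L z, z) \<in> spi_tri L" unfolding mem_spi_tri_iff using obj_mor[OF o] obj_src[OF o] assms by simp
  show "spi_unit L z \<in> spi_set L" unfolding spi_unit_def using spi_cls_in_spi_set[OF t] .
  show "spi_to_pg L (spi_unit L z) = (z, 0, z)" unfolding spi_unit_def spi_to_pg_spi_cls[OF t]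
    using fcat_frng[OF assms] by simp
qed

lemma bdry_subset_filters: "bdry L \<subseteq> filters L"
  unfolding bdry_def filter_top_def using closure_of_subset_topspace by fastforce

lemma mem_spi_unit_image_bdry_iff:
  assumes "m \<in> spi_set L" and "spi_to_pg L m = (x, 0, x)"
  shows "m \<in> spi_unit L ` bdry L \<longleftrightarrow> x \<in> bdry L"
proof
  assume "m \<in> spi_unit L ` bdry L"
  then obtain z where "z \<in> bdry L" "m = spi_unit L z" by blast
  then show "x \<in> bdry L" using assms(2) spi_to_pg_spi_unit bdry_subset_filters unfolding filters_def by auto
next
  assume x: "x \<in> bdry L"
  then have "is_filter L x" using bdry_subset_filters unfolding filters_def by blast
  then have "spi_unit L x = m"
    using spi_unit_in_spi_set spi_to_pg_spi_unit assms inj_on_spi_to_pg unfolding inj_on_def by metis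
  then show "m \<in> spi_unit L ` bdry L" using x by blast
qed

lemma mem_bspi_set_iff:
  assumes c: "c \<in> spi_set L"
  shows "c \<in> bspi_set L \<longleftrightarrow> fst (spi_to_pg L c) \<in> bdry L \<and> snd (snd (spi_to_pg L c)) \<in> bdry L"
proof -
  obtain x q y where f: "spi_to_pg L c = (x, q, y)" by (cases "spi_to_pg L c")
  define ci where "ci = spi_inv L c"
  have ci: "ci \<in> spi_set L" "spi_to_pg L ci = (y, - q, x)"
    using spi_inv_closed_hom[OF c] f unfolding ci_def pg_inv_def by auto
  have "spi_comp L c ci" "spi_comp L ci c"
    using spi_comp_iff[OF c ci(1)] spi_comp_iff[OF ci(1) c] f ci(2) unfolding pg_comp_def by auto
  then have "spi_mult L c ci \<in> spi_set L" "spi_to_pg L (spi_mult L c ci) = (x, 0, x)"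
    "spi_mult L ci c \<in> spi_set L" "spi_to_pg L (spi_mult L ci c) = (y, 0, y)"
    using spi_mult_closed_hom[OF c ci(1)] spi_mult_closed_hom[OF ci(1) c] f ci(2) unfolding pg_mult_def by auto
  then show ?thesis
    using mem_spi_unit_image_bdry_iff c f unfolding bspi_set_def ci_def by auto
qed

lemma spi_to_pg_bspi_set: "spi_to_pg L ` bspi_set L = bpg_set P L"
proof -
  have "bspi_set L \<subseteq> spi_set L" unfolding bspi_set_def by blast
  then have "spi_to_pg L ` bspi_set L = {p \<in> spi_to_pg L ` spi_set L. fst p \<in> bdry L \<and> snd (snd p) \<in> bdry L}"
    using mem_bspi_set_iff by auto
  then show ?thesis unfolding spi_to_pg_image bpg_set_def .
qed

end

section \<open>Cylinder sets and Spielberg's topology\<close>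

definition cylinder :: "('a, 'q) pgraph \<Rightarrow> 'a set \<Rightarrow> 'a set \<Rightarrow> 'a set set" where
  "cylinder L Pos Neg = {w \<in> filters L. Pos \<subseteq> w \<and> Neg \<inter> w = {}}"

definition filter_subbasis :: "('a, 'q) pgraph \<Rightarrow> 'a set set set" where
  "filter_subbasis L = {{x. l \<in> x} | l. l \<in> Mor L} \<union> {{x. l \<notin> x} | l. l \<in> Mor L}"

lemma filter_top_eq: "filter_top L = subtopology (topology_generated_by (filter_subbasis L)) (filters L)"
  unfolding filter_top_def filter_subbasis_def ..

lemma cylinder_Un: "cylinder L (P1 \<union> P2) (N1 \<union> N2) = cylinder L P1 N1 \<inter> cylinder L P2 N2"
  unfolding cylinder_def by blast

definition cylinder_nbhd :: "('a, 'q) pgraph \<Rightarrow> 'a set \<Rightarrow> ('a set \<Rightarrow> bool) \<Rightarrow> bool" where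
  "cylinder_nbhd L z Q \<longleftrightarrow> (\<exists>Pos Neg. finite Pos \<and> finite Neg \<and> Neg \<subseteq> Mor L \<and>
     z \<in> cylinder L Pos Neg \<and> (\<forall>z'\<in>cylinder L Pos Neg. Q z'))"

lemma cylinder_nbhd_mono:
  "cylinder_nbhd L z Q \<Longrightarrow> (\<And>z'. Q z' \<Longrightarrow> Q' z') \<Longrightarrow> cylinder_nbhd L z Q'"
  unfolding cylinder_nbhd_def by blast

lemma cylinder_nbhd_conj:
  assumes "cylinder_nbhd L z Q1" and "cylinder_nbhd L z Q2"
  shows "cylinder_nbhd L z (\<lambda>z'. Q1 z' \<and> Q2 z')"
proof -
  obtain P1 N1 P2 N2 where "finite P1" "finite N1" "N1 \<subseteq> Mor L" "z \<in> cylinder L P1 N1"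
      "\<forall>z'\<in>cylinder L P1 N1. Q1 z'" "finite P2" "finite N2" "N2 \<subseteq> Mor L" "z \<in> cylinder L P2 N2"
      "\<forall>z'\<in>cylinder L P2 N2. Q2 z'"
    using assms unfolding cylinder_nbhd_def by blast
  then show ?thesis unfolding cylinder_nbhd_def
    by (intro exI[of _ "P1 \<union> P2"] exI[of _ "N1 \<union> N2"]) (simp add: cylinder_Un)
qed

lemma topspace_filter_top: "topspace (filter_top L) = filters L"
proof -
  have "x \<in> \<Union>(filter_subbasis L)" if x: "x \<in> filters L" for x
  proof -
    obtain l where "l \<in> x" using x unfolding filters_def is_filter_def by blast
    moreover have "l \<in> Mor L" using x \<open>l \<in> x\<close> unfolding filters_def is_filter_def by blast
    ultimately show ?thesis unfolding filter_subbasis_def by blast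
  qed
  then show ?thesis unfolding filter_top_eq by auto
qed

lemma openin_cylinder:
  assumes "finite Pos" "finite Neg" "Pos \<subseteq> Mor L" "Neg \<subseteq> Mor L"
  shows "openin (filter_top L) (cylinder L Pos Neg)"
proof -
  have sub: "openin (filter_top L) ({x. l \<in> x} \<inter> filters L)" "openin (filter_top L) ({x. l \<notin> x} \<inter> filters L)"
    if "l \<in> Mor L" for l
    unfolding filter_top_eq using that
    by (auto intro!: openin_subtopology_Int topology_generated_by_Basis simp: filter_subbasis_def)
  have "cylinder L Pos Neg =
      ((\<Inter>l\<in>Pos. {x. l \<in> x} \<inter> filters L) \<inter> topspace (filter_top L)) \<inter>
      ((\<Inter>l\<in>Neg. {x. l \<notin> x} \<inter> filters L) \<inter> topspace (filter_top L))"
    unfolding cylinder_def topspace_filter_top by blast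
  also have "openin (filter_top L) \<dots>"
  proof (rule openin_Int)
    show "openin (filter_top L) ((\<Inter>l\<in>Pos. {x. l \<in> x} \<inter> filters L) \<inter> topspace (filter_top L))"
      using assms(1) by (rule openin_INT) (use sub(1) assms(3) in blast)
    show "openin (filter_top L) ((\<Inter>l\<in>Neg. {x. l \<notin> x} \<inter> filters L) \<inter> topspace (filter_top L))"
      using assms(2) by (rule openin_INT) (use sub(2) assms(4) in blast)
  qed
  finally show ?thesis .
qed

context pgraph
begin

lemma Ehat_eq_cylinder:
  assumes a: "a \<in> Mor L" and B: "B \<subseteq> ext L a"
  shows "Ehat L a B = cylinder L {a} B"
proof (intro set_eqI iffI)
  fix x assume "x \<in> Ehat L a B"
  then obtain g where x: "is_filter L x" "g \<in> x" "x \<inter> ext L g \<subseteq> ext L a - (\<Union>b\<in>B. ext L b)"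
    unfolding Ehat_def filters_def by blast
  have gM: "g \<in> Mor L" using filter_mor[OF x(1,2)] .
  have "pre L a g" using x(2,3) pre_refl[OF gM] a unfolding pre_def by blast
  then have "a \<in> x" using filter_hereditary[OF x(1,2)] by blast
  moreover have "b \<notin> x" if "b \<in> B" for b
  proof
    assume "b \<in> x"
    then obtain k where "k \<in> x" "pre L g k" "pre L b k" using filter_directed[OF x(1,2)] by blast
    then show False using x(3) \<open>b \<in> B\<close> unfolding pre_def by blast
  qed
  ultimately show "x \<in> cylinder L {a} B" using x(1) unfolding cylinder_def filters_def by blast
next
  fix x assume "x \<in> cylinder L {a} B"
  then have x: "is_filter L x" "a \<in> x" "B \<inter> x = {}" unfolding cylinder_def filters_def by auto
  have "x \<inter> ext L a \<subseteq> ext L a - (\<Union>b\<in>B. ext L b)"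
  proof
    fix k assume k: "k \<in> x \<inter> ext L a"
    have "k \<notin> ext L b" if "b \<in> B" for b
    proof
      assume "k \<in> ext L b"
      moreover have "b \<in> Mor L" using pre_mor(2) a B that unfolding pre_def by blast
      ultimately have "b \<in> x" using filter_hereditary[of x k b] k x(1) unfolding pre_def by blast
      then show False using x(3) that by blast
    qed
    then show "k \<in> ext L a - (\<Union>b\<in>B. ext L b)" using k by blast
  qed
  then show "x \<in> Ehat L a B" unfolding Ehat_def filters_def using x(1,2) by blast
qed

lemma filter_mem_iff_meets:
  assumes w: "is_filter L w" "a \<in> w" and l: "l \<in> Mor L"
    and J: "J \<subseteq> Mor L" "ext L a \<inter> ext L l = (\<Union>k\<in>J. ext L k)"
  shows "l \<in> w \<longleftrightarrow> J \<inter> w \<noteq> {}"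
proof
  assume "l \<in> w"
  then obtain k0 where k0: "k0 \<in> w" "pre L a k0" "pre L l k0" using filter_directed[OF w] by blast
  then have "k0 \<in> ext L a \<inter> ext L l" unfolding pre_def by blast
  then obtain k where "k \<in> J" "k0 \<in> ext L k" using J(2) by blast
  then have "k \<in> w" using filter_hereditary[OF w(1) k0(1)] J(1) unfolding pre_def by blast
  then show "J \<inter> w \<noteq> {}" using \<open>k \<in> J\<close> by blast
next
  assume "J \<inter> w \<noteq> {}"
  then obtain k where k: "k \<in> J" "k \<in> w" by blast
  then have "k \<in> ext L l" using J pre_refl unfolding pre_def by blast
  then show "l \<in> w" using filter_hereditary[OF w(1) k(2)] l unfolding pre_def by blast
qed

lemma filter_upper_bound:
  assumes "is_filter L z" "finite F" "F \<subseteq> z"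
  shows "\<exists>a\<in>z. \<forall>p\<in>F. pre L p a"
  using assms(2,3)
proof (induction F rule: finite_induct)
  case empty
  then show ?case using frng_mem[OF assms(1)] by blast
next
  case (insert p F)
  then obtain a where a: "a \<in> z" "\<forall>q\<in>F. pre L q a" by blast
  obtain k where "k \<in> z" "pre L a k" "pre L p k" using filter_directed[OF assms(1) a(1)] insert(4) by blast
  then show ?case using a(2) pre_trans by blast
qed

end

locale fa_pgraph = pgraph +
  assumes finitely_aligned: "finitely_aligned L"
begin

lemma finitely_alignedE:
  assumes "m \<in> Mor L" "n \<in> Mor L"
  obtains J where "finite J" "J \<subseteq> Mor L" "ext L m \<inter> ext L n = (\<Union>k\<in>J. ext L k)"
  using finitely_aligned assms unfolding finitely_aligned_def by (meson that)

lemma mem_fcat_iff_meets: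
  assumes a: "a \<in> Mor L" and l: "l \<in> Mor L"
  obtains N where "finite N" "N \<subseteq> Mor L"
    "\<And>z. is_filter L z \<Longrightarrow> src L a = frng L z \<Longrightarrow> l \<in> fcat L a z \<longleftrightarrow> N \<inter> z \<noteq> {}"
proof -
  obtain J where J: "finite J" "J \<subseteq> Mor L" "ext L a \<inter> ext L l = (\<Union>k\<in>J. ext L k)"
    using finitely_alignedE[OF a l] .
  have J_ext: "k \<in> ext L a" if "k \<in> J" for k
  proof -
    have "k \<in> ext L k" using pre_refl[of k] J(2) that unfolding pre_def by blast
    then show ?thesis using J(3) that by blast
  qed
  define N where "N = {g \<in> Mor L. src L a = rng L g \<and> cmp L a g \<in> J}"
  have "inj_on (cmp L a) N"
    by (rule inj_onI) (use cmp_left_cancel[OF a] in \<open>auto simp: N_def\<close>)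
  moreover have "cmp L a ` N \<subseteq> J" unfolding N_def by blast
  ultimately have "finite N" using finite_imageD[OF finite_subset[OF _ J(1)]] by blast
  moreover have "N \<subseteq> Mor L" unfolding N_def by blast
  moreover have "l \<in> fcat L a z \<longleftrightarrow> N \<inter> z \<noteq> {}" if z: "is_filter L z" "src L a = frng L z" for z
  proof -
    have "l \<in> fcat L a z \<longleftrightarrow> J \<inter> fcat L a z \<noteq> {}"
      by (rule filter_mem_iff_meets[OF is_filter_fcat[OF z(1) a z(2)] mem_fcat_self[OF z(1) a z(2)] l J(2,3)])
    also have "\<dots> \<longleftrightarrow> N \<inter> z \<noteq> {}"
    proof
      assume "J \<inter> fcat L a z \<noteq> {}"
      then obtain k where k: "k \<in> J" "k \<in> fcat L a z" by blast
      then obtain g where g: "g \<in> Mor L" "src L a = rng L g" "k = cmp L a g"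
        using J_ext unfolding ext_def by blast
      then have "g \<in> z" using k(2) cmp_mem_fcat_iff[OF z(1) a z(2)] by simp
      then show "N \<inter> z \<noteq> {}" using g k(1) unfolding N_def by blast
    next
      assume "N \<inter> z \<noteq> {}"
      then obtain g where "g \<in> N" "g \<in> z" by blast
      then show "J \<inter> fcat L a z \<noteq> {}" using cmp_mem_fcat[OF z(1) a z(2)] unfolding N_def by blast
    qed
    finally show ?thesis .
  qed
  ultimately show ?thesis by (rule that)
qed

lemma fcat_subbasic_cylinder_nbhd:
  assumes s: "s \<in> filter_subbasis L" and a: "a \<in> Mor L"
    and z: "is_filter L z" "src L a = frng L z" and az: "fcat L a z \<in> s"
  shows "cylinder_nbhd L z (\<lambda>z'. src L a = frng L z' \<longrightarrow> fcat L a z' \<in> s)"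
proof -
  obtain l where l: "l \<in> Mor L" "s = {x. l \<in> x} \<or> s = {x. l \<notin> x}"
    using s unfolding filter_subbasis_def by blast
  obtain N where N: "finite N" "N \<subseteq> Mor L"
    "\<And>z. is_filter L z \<Longrightarrow> src L a = frng L z \<Longrightarrow> l \<in> fcat L a z \<longleftrightarrow> N \<inter> z \<noteq> {}"
    using mem_fcat_iff_meets[OF a l(1)] by blast
  have zF: "z \<in> filters L" using z(1) unfolding filters_def by blast
  have cyl: "is_filter L z'" if "z' \<in> cylinder L Pos Neg" for z' Pos Neg
    using that unfolding cylinder_def filters_def by blast
  show ?thesis
  proof (cases "s = {x. l \<in> x}")
    case True
    then obtain g where g: "g \<in> N" "g \<in> z" using N(3)[OF z] az by blast
    have "fcat L a z' \<in> s" if "z' \<in> cylinder L {g} {}" "src L a = frng L z'" for z'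
      using N(3)[OF cyl[OF that(1)] that(2)] g(1) that(1) True unfolding cylinder_def by blast
    then show ?thesis using zF g(2) unfolding cylinder_nbhd_def cylinder_def
      by (intro exI[of _ "{g}"] exI[of _ "{}"]) simp
  next
    case False
    then have N_z: "N \<inter> z = {}" and s: "s = {x. l \<notin> x}" using N(3)[OF z] az l(2) by auto
    have "fcat L a z' \<in> s" if "z' \<in> cylinder L {} N" "src L a = frng L z'" for z'
      using N(3)[OF cyl[OF that(1)] that(2)] that(1) s unfolding cylinder_def by blast
    then show ?thesis using zF N(1,2) N_z unfolding cylinder_nbhd_def cylinder_def
      by (intro exI[of _ "{}"] exI[of _ N]) simp
  qed
qed

lemma fcat_cylinder_nbhd_generated:
  assumes "generate_topology_on (filter_subbasis L) U" "a \<in> Mor L"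
    and "is_filter L z" "src L a = frng L z" "fcat L a z \<in> U"
  shows "cylinder_nbhd L z (\<lambda>z'. src L a = frng L z' \<longrightarrow> fcat L a z' \<in> U)"
  using assms(1,3-5)
proof (induction arbitrary: z)
  case Empty
  then show ?case by simp
next
  case (Int U1 U2)
  then have "cylinder_nbhd L z (\<lambda>z'. src L a = frng L z' \<longrightarrow> fcat L a z' \<in> U1)"
    "cylinder_nbhd L z (\<lambda>z'. src L a = frng L z' \<longrightarrow> fcat L a z' \<in> U2)"
    by auto
  then have "cylinder_nbhd L z (\<lambda>z'. (src L a = frng L z' \<longrightarrow> fcat L a z' \<in> U1) \<and>
      (src L a = frng L z' \<longrightarrow> fcat L a z' \<in> U2))"
    by (rule cylinder_nbhd_conj)
  then show ?case by (rule cylinder_nbhd_mono) blast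
next
  case (UN K)
  then obtain k where "k \<in> K" "fcat L a z \<in> k" by blast
  then have "cylinder_nbhd L z (\<lambda>z'. src L a = frng L z' \<longrightarrow> fcat L a z' \<in> k)"
    using UN.IH[of k z] UN.prems by blast
  then show ?case by (rule cylinder_nbhd_mono) (use \<open>k \<in> K\<close> in blast)
next
  case (Basis s)
  then show ?case using fcat_subbasic_cylinder_nbhd[OF _ assms(2)] by blast
qed

lemma fcat_cylinder_nbhd:
  assumes U: "openin (filter_top L) U" and a: "a \<in> Mor L" and z: "is_filter L z" "src L a = frng L z"
    and az: "fcat L a z \<in> U"
  shows "cylinder_nbhd L z (\<lambda>z'. src L a = frng L z' \<longrightarrow> fcat L a z' \<in> U)"
proof -
  obtain W where W: "generate_topology_on (filter_subbasis L) W" "U = W \<inter> filters L"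
    using U unfolding filter_top_eq openin_subtopology openin_topology_generated_by_iff by blast
  have "cylinder_nbhd L z (\<lambda>z'. src L a = frng L z' \<longrightarrow> fcat L a z' \<in> W)"
    using fcat_cylinder_nbhd_generated[OF W(1) a z] az W(2) by blast
  moreover have "cylinder_nbhd L z (\<lambda>z'. z' \<in> filters L)"
    unfolding cylinder_nbhd_def cylinder_def using z(1)
    by (intro exI[of _ "{}"]) (simp add: filters_def)
  ultimately have "cylinder_nbhd L z (\<lambda>z'. (src L a = frng L z' \<longrightarrow> fcat L a z' \<in> W) \<and> z' \<in> filters L)"
    by (rule cylinder_nbhd_conj)
  then show ?thesis
  proof (rule cylinder_nbhd_mono, intro impI)
    fix z' assume "(src L a = frng L z' \<longrightarrow> fcat L a z' \<in> W) \<and> z' \<in> filters L" "src L a = frng L z'"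
    then show "fcat L a z' \<in> U"
      using is_filter_fcat[OF _ a] W(2) unfolding filters_def by blast
  qed
qed

lemma finitely_aligned_choice:
  assumes "a \<in> Mor L" and "N \<subseteq> Mor L"
  obtains J where "\<And>l. l \<in> N \<Longrightarrow> finite (J l)" "\<And>l. l \<in> N \<Longrightarrow> J l \<subseteq> Mor L"
    "\<And>l. l \<in> N \<Longrightarrow> ext L a \<inter> ext L l = (\<Union>k\<in>J l. ext L k)"
proof -
  have "\<forall>l\<in>N. \<exists>J. finite J \<and> J \<subseteq> Mor L \<and> ext L a \<inter> ext L l = (\<Union>k\<in>J. ext L k)"
  proof
    fix l assume "l \<in> N"
    then obtain J where "finite J" "J \<subseteq> Mor L" "ext L a \<inter> ext L l = (\<Union>k\<in>J. ext L k)"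
      using assms finitely_alignedE[OF assms(1), of l] by blast
    then show "\<exists>J. finite J \<and> J \<subseteq> Mor L \<and> ext L a \<inter> ext L l = (\<Union>k\<in>J. ext L k)" by blast
  qed
  from bchoice[OF this] obtain J
    where "\<forall>l\<in>N. finite (J l) \<and> J l \<subseteq> Mor L \<and> ext L a \<inter> ext L l = (\<Union>k\<in>J l. ext L k)" ..
  then show ?thesis by (intro that) auto
qed

lemma avoids_iff_avoids_extensions:
  assumes a: "a \<in> Mor L" and fin: "finite Neg" and Neg: "Neg \<subseteq> Mor L"
  obtains B where "finite B" "B \<subseteq> ext L a"
    "\<And>w. is_filter L w \<Longrightarrow> a \<in> w \<Longrightarrow> Neg \<inter> w = {} \<longleftrightarrow> B \<inter> w = {}"
proof -
  obtain J where J: "\<And>l. l \<in> Neg \<Longrightarrow> finite (J l)" "\<And>l. l \<in> Neg \<Longrightarrow> J l \<subseteq> Mor L"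
    "\<And>l. l \<in> Neg \<Longrightarrow> ext L a \<inter> ext L l = (\<Union>k\<in>J l. ext L k)"
    using finitely_aligned_choice[OF a Neg] by blast
  have "finite (\<Union>l\<in>Neg. J l)" using fin J(1) by blast
  moreover have "(\<Union>l\<in>Neg. J l) \<subseteq> ext L a"
  proof
    fix k assume "k \<in> (\<Union>l\<in>Neg. J l)"
    then obtain l where l: "l \<in> Neg" "k \<in> J l" by blast
    then have "k \<in> ext L k" using pre_refl[of k] J(2) unfolding pre_def by blast
    then have "k \<in> (\<Union>k\<in>J l. ext L k)" using l(2) by blast
    then show "k \<in> ext L a" using J(3)[OF l(1)] by blast
  qed
  moreover have "Neg \<inter> w = {} \<longleftrightarrow> (\<Union>l\<in>Neg. J l) \<inter> w = {}" if "is_filter L w" "a \<in> w" for w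
    using filter_mem_iff_meets[OF that _ J(2,3)] Neg by blast
  ultimately show ?thesis by (rule that)
qed

lemma Ehat_nbhd_if_cylinder_nbhd:
  assumes "cylinder_nbhd L z Q"
  obtains E where "E \<in> spi_basis L" "z \<in> E" "\<And>z'. z' \<in> E \<Longrightarrow> Q z'"
proof -
  obtain Pos Neg where fin: "finite Pos" "finite Neg" and Neg: "Neg \<subseteq> Mor L"
    and z: "z \<in> cylinder L Pos Neg" and Q: "\<forall>z'\<in>cylinder L Pos Neg. Q z'"
    using assms unfolding cylinder_nbhd_def by blast
  have fz: "is_filter L z" "Pos \<subseteq> z" "Neg \<inter> z = {}" using z unfolding cylinder_def filters_def by auto
  obtain a where a: "a \<in> z" "\<forall>p\<in>Pos. pre L p a" using filter_upper_bound[OF fz(1) fin(1) fz(2)] by blast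
  have aM: "a \<in> Mor L" using filter_mor[OF fz(1) a(1)] .
  obtain B where B: "finite B" "B \<subseteq> ext L a"
    "\<And>w. is_filter L w \<Longrightarrow> a \<in> w \<Longrightarrow> Neg \<inter> w = {} \<longleftrightarrow> B \<inter> w = {}"
    using avoids_iff_avoids_extensions[OF aM fin(2) Neg] by blast
  have zB: "z \<in> cylinder L {a} B" using B(3)[OF fz(1) a(1)] fz a(1) unfolding cylinder_def filters_def by blast
  then have "Ehat L a B \<in> spi_basis L"
    unfolding spi_basis_def cylinder_def using aM B(1,2) by blast
  moreover have "cylinder L {a} B \<subseteq> cylinder L Pos Neg"
  proof
    fix w assume "w \<in> cylinder L {a} B"
    then have w: "is_filter L w" "a \<in> w" "B \<inter> w = {}" unfolding cylinder_def filters_def by auto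
    then have "Pos \<subseteq> w" using a(2) filter_hereditary[OF w(1,2)] by blast
    then show "w \<in> cylinder L Pos Neg" using w B(3)[OF w(1,2)] unfolding cylinder_def filters_def by blast
  qed
  then have "\<forall>z'\<in>Ehat L a B. Q z'" using Q Ehat_eq_cylinder[OF aM B(2)] by blast
  ultimately show ?thesis using that zB Ehat_eq_cylinder[OF aM B(2)] by simp
qed

end

section \<open>The homeomorphism\<close>

definition pg_basic ::
  "'q::group_add set \<Rightarrow> ('a, 'q) pgraph \<Rightarrow> 'q \<Rightarrow> 'q \<Rightarrow> 'a set set \<Rightarrow> 'a set set \<Rightarrow> ('a set \<times> 'q \<times> 'a set) set"
  where "pg_basic P L m n U V = {(x, m - n, y) | x y. (x, m - n, y) \<in> pg_set P L \<and> x \<in> U \<and> y \<in> V \<and>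
                          in_dom L x m \<and> in_dom L y n \<and> fshift L x m = fshift L y n}"

definition spi_basic :: "('a, 'q) pgraph \<Rightarrow> 'a \<Rightarrow> 'a \<Rightarrow> 'a set set \<Rightarrow> ('a \<times> 'a \<times> 'a set) set set" where
  "spi_basic L a b B = {spi_cls L a b x | x. x \<in> B \<and> (a, b, x) \<in> spi_tri L}"

lemma pg_top_eq: "pg_top P L = subtopology (topology_generated_by
     {pg_basic P L m n U V | m n U V. m \<in> P \<and> n \<in> P \<and> openin (filter_top L) U \<and> openin (filter_top L) V})
     (pg_set P L)"
  unfolding pg_top_def pg_basic_def ..

lemma spi_top_eq: "spi_top L = subtopology (topology_generated_by
     {spi_basic L a b B | a b B. a \<in> Mor L \<and> b \<in> Mor L \<and> B \<in> spi_basis L}) (spi_set L)"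
  unfolding spi_top_def spi_basic_def ..

context pgraph
begin

lemma tri_to_pg_in_pg_basic:
  assumes t: "(a, b, z) \<in> spi_tri L" and "fcat L a z \<in> U" "fcat L b z \<in> V"
  shows "tri_to_pg L (a, b, z) \<in> pg_basic P L (deg L a) (deg L b) U V"
proof -
  have "a \<in> Mor L" "b \<in> Mor L" "is_filter L z" "src L a = frng L z" "src L b = frng L z"
    using t by (auto simp: mem_spi_tri_iff)
  then show ?thesis
    unfolding pg_basic_def using assms tri_to_pg_in_pg_set[OF t] in_dom_fcat fshift_fcat by auto
qed

lemma pg_basic_cases:
  assumes "p \<in> pg_basic P L m n U V"
  obtains a b z where "(a, b, z) \<in> spi_tri L" "deg L a = m" "deg L b = n" "p = tri_to_pg L (a, b, z)"
    "fcat L a z \<in> U" "fcat L b z \<in> V"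
proof -
  obtain x y where p: "p = (x, m - n, y)" "x \<in> filters L" "y \<in> filters L" "x \<in> U" "y \<in> V"
    "in_dom L x m" "in_dom L y n" "fstrip L (seg L x m) x = fstrip L (seg L y n) y"
    using assms unfolding pg_basic_def pg_set_def fshift_eq_fstrip by blast
  have fx: "is_filter L x" and fy: "is_filter L y" using p(2,3) unfolding filters_def by auto
  note seg = seg_mem[OF fx p(6)] seg_mem[OF fy p(7)]
  note t = tri_to_pg_fstrip[OF fx fy seg(1) seg(3) p(8)]
  show ?thesis by (rule that[OF t(1)]) (use seg t(2) p in auto)
qed

lemma fcat_mem_cylinder_iff:
  assumes z: "is_filter L z" "a \<in> Mor L" "src L a = frng L z"
    and a0: "a0 \<in> Mor L" "src L a = rng L a0" and B0: "B0 \<subseteq> ext L a0"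
  shows "fcat L a z \<in> cylinder L {cmp L a a0} (cmp L a ` B0) \<longleftrightarrow> z \<in> cylinder L {a0} B0"
proof -
  have "b' \<in> Mor L" "src L a = rng L b'" if "b' \<in> B0" for b'
    using B0 that a0 pre_rng pre_mor(2) unfolding pre_def by auto
  then have "cmp L a ` B0 \<inter> fcat L a z = {} \<longleftrightarrow> B0 \<inter> z = {}"
    using cmp_mem_fcat_iff[OF z] by blast
  moreover have "cmp L a a0 \<in> fcat L a z \<longleftrightarrow> a0 \<in> z" using cmp_mem_fcat_iff[OF z a0] .
  ultimately show ?thesis
    using is_filter_fcat[OF z] z(1) unfolding cylinder_def filters_def by auto
qed

lemma eq_if_mem_fcat_deg_eq:
  assumes "is_filter L z" "a' \<in> Mor L" "src L a' = frng L z" "a \<in> fcat L a' z" "deg L a = deg L a'"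
  shows "a = a'"
  using filter_deg_unique[OF is_filter_fcat[OF assms(1-3)] assms(4) mem_fcat_self[OF assms(1-3)] assms(5)] .

lemma image_spi_basic_cylinder:
  assumes a: "a \<in> Mor L" and b: "b \<in> Mor L"
    and a0: "a0 \<in> Mor L" "src L a = rng L a0" and B0: "B0 \<subseteq> ext L a0"
  shows "spi_to_pg L ` spi_basic L a b (cylinder L {a0} B0) =
    pg_basic P L (deg L a) (deg L b) (cylinder L {cmp L a a0} (cmp L a ` B0)) (cylinder L {b} {})"
    (is "_ = pg_basic P L _ _ ?U ?V")
proof (intro set_eqI iffI)
  fix p assume "p \<in> spi_to_pg L ` spi_basic L a b (cylinder L {a0} B0)"
  then obtain z where z: "z \<in> cylinder L {a0} B0" "(a, b, z) \<in> spi_tri L" "p = spi_to_pg L (spi_cls L a b z)"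
    unfolding spi_basic_def by blast
  then have p: "p = tri_to_pg L (a, b, z)" using spi_to_pg_spi_cls by simp
  have t: "is_filter L z" "src L a = frng L z" "src L b = frng L z"
    using z(2) by (auto simp: mem_spi_tri_iff)
  have "fcat L a z \<in> ?U" using fcat_mem_cylinder_iff[OF t(1) a t(2) a0 B0] z(1) by simp
  moreover have "fcat L b z \<in> ?V"
    using mem_fcat_self[OF t(1) b t(3)] is_filter_fcat[OF t(1) b t(3)] unfolding cylinder_def filters_def by simp
  ultimately show "p \<in> pg_basic P L (deg L a) (deg L b) ?U ?V" unfolding p by (rule tri_to_pg_in_pg_basic[OF z(2)])
next
  fix p assume "p \<in> pg_basic P L (deg L a) (deg L b) ?U ?V"
  then obtain a' b' z where p: "(a', b', z) \<in> spi_tri L" "deg L a' = deg L a" "deg L b' = deg L b"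
      "p = tri_to_pg L (a', b', z)" "fcat L a' z \<in> ?U" "fcat L b' z \<in> ?V"
    by (rule pg_basic_cases)
  have t: "a' \<in> Mor L" "b' \<in> Mor L" "is_filter L z" "src L a' = frng L z" "src L b' = frng L z"
    using p(1) by (auto simp: mem_spi_tri_iff)
  have "cmp L a a0 \<in> fcat L a' z" using p(5) unfolding cylinder_def by blast
  then have "a \<in> fcat L a' z"
    using filter_hereditary[OF is_filter_fcat[OF t(3,1,4)] _ pre_cmp[OF a a0]] by blast
  then have aa': "a' = a" using eq_if_mem_fcat_deg_eq[OF t(3,1,4)] p(2) by (metis sym)
  have "b \<in> fcat L b' z" using p(6) unfolding cylinder_def by blast
  then have bb': "b' = b" using eq_if_mem_fcat_deg_eq[OF t(3,2,5)] p(3) by (metis sym)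
  have tri: "(a, b, z) \<in> spi_tri L" and src: "src L a = frng L z" and "fcat L a z \<in> ?U"
    using p(1,5) t(4) unfolding aa' bb' by auto
  then have "z \<in> cylinder L {a0} B0" using fcat_mem_cylinder_iff[OF t(3) a src a0 B0] by blast
  then have "spi_cls L a b z \<in> spi_basic L a b (cylinder L {a0} B0)"
    unfolding spi_basic_def using tri by blast
  moreover have "p = spi_to_pg L (spi_cls L a b z)" using spi_to_pg_spi_cls[OF tri] p(4) aa' bb' by simp
  ultimately show "p \<in> spi_to_pg L ` spi_basic L a b (cylinder L {a0} B0)" by (rule rev_image_eqI)
qed

lemma pg_basic_subset: "pg_basic P L m n U V \<subseteq> pg_set P L"
  unfolding pg_basic_def by blast

lemma openin_pg_basic:
  assumes "m \<in> P" "n \<in> P" "openin (filter_top L) U" "openin (filter_top L) V"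
  shows "openin (pg_top P L) (pg_basic P L m n U V)"
proof -
  have "openin (topology_generated_by
     {pg_basic P L m n U V | m n U V. m \<in> P \<and> n \<in> P \<and> openin (filter_top L) U \<and> openin (filter_top L) V})
     (pg_basic P L m n U V)"
    using assms by (intro topology_generated_by_Basis) blast
  then have "openin (pg_top P L) (pg_basic P L m n U V \<inter> pg_set P L)"
    unfolding pg_top_eq by (rule openin_subtopology_Int)
  moreover have "pg_basic P L m n U V \<inter> pg_set P L = pg_basic P L m n U V" using pg_basic_subset by blast
  ultimately show ?thesis by simp
qed

lemma spi_basic_subset: "spi_basic L a b B \<subseteq> spi_set L"
  unfolding spi_basic_def using spi_cls_in_spi_set by blast

lemma openin_spi_basic:
  assumes "a \<in> Mor L" "b \<in> Mor L" "B \<in> spi_basis L"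
  shows "openin (spi_top L) (spi_basic L a b B)"
proof -
  have "openin (topology_generated_by
      {spi_basic L a b B | a b B. a \<in> Mor L \<and> b \<in> Mor L \<and> B \<in> spi_basis L}) (spi_basic L a b B)"
    using assms by (intro topology_generated_by_Basis) blast
  then have "openin (spi_top L) (spi_basic L a b B \<inter> spi_set L)"
    unfolding spi_top_eq by (rule openin_subtopology_Int)
  then show ?thesis using spi_basic_subset by (simp add: Int_absorb2)
qed

lemma openin_image_spi_basic:
  assumes a: "a \<in> Mor L" and b: "b \<in> Mor L" and B: "B \<in> spi_basis L"
  shows "openin (pg_top P L) (spi_to_pg L ` spi_basic L a b B)"
proof -
  obtain a0 B0 where a0: "a0 \<in> Mor L" "finite B0" "B0 \<subseteq> ext L a0 - {a0}" and "B = Ehat L a0 B0"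
    using B unfolding spi_basis_def by blast
  then have B0: "B0 \<subseteq> ext L a0" and B_eq: "B = cylinder L {a0} B0" using Ehat_eq_cylinder by auto
  show ?thesis
  proof (cases "src L a = rng L a0")
    case False
    have "x \<notin> cylinder L {a0} B0" if "(a, b, x) \<in> spi_tri L" for x
    proof
      assume "x \<in> cylinder L {a0} B0"
      then have "is_filter L x" "a0 \<in> x" unfolding cylinder_def filters_def by auto
      then have "rng L a0 = frng L x" by (rule rng_eq_frng)
      moreover have "src L a = frng L x" using that by (simp add: mem_spi_tri_iff)
      ultimately show False using False by simp
    qed
    then have "spi_basic L a b B = {}" unfolding B_eq spi_basic_def by blast
    then show ?thesis by simp
  next
    case True
    have "cmp L a b' \<in> Mor L" if "b' \<in> B0" for b'
    proof -
      have "pre L a0 b'" using B0 that a0(1) unfolding pre_def by blast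
      then show ?thesis using cmp_mor[OF a] pre_mor(2) pre_rng True by metis
    qed
    then have "cmp L a ` B0 \<subseteq> Mor L" by blast
    then have "openin (filter_top L) (cylinder L {cmp L a a0} (cmp L a ` B0))"
      using openin_cylinder[of "{cmp L a a0}" "cmp L a ` B0"] a0(2) cmp_mor[OF a a0(1) True] by blast
    moreover have "openin (filter_top L) (cylinder L {b} {})" using openin_cylinder[of "{b}" "{}"] b by blast
    ultimately show ?thesis
      using openin_pg_basic[OF deg_in_P[OF a] deg_in_P[OF b]] image_spi_basic_cylinder[OF a b a0(1) True B0]
      unfolding B_eq by simp
  qed
qed

lemma spi_set_subset_spi_basic_cover:
  "spi_set L \<subseteq> \<Union>{spi_basic L a b B | a b B. a \<in> Mor L \<and> b \<in> Mor L \<and> B \<in> spi_basis L}"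
proof
  fix c assume "c \<in> spi_set L"
  then obtain a b x where t: "(a, b, x) \<in> spi_tri L" "c = spi_cls L a b x" by (elim spi_set_cases)
  then have ab: "a \<in> Mor L" "b \<in> Mor L" "is_filter L x" by (auto simp: mem_spi_tri_iff)
  have v: "frng L x \<in> Mor L" using obj_mor[OF frng_in_Obj[OF ab(3)]] .
  have "Ehat L (frng L x) {} \<in> spi_basis L" unfolding spi_basis_def using v by blast
  moreover have "x \<in> Ehat L (frng L x) {}"
    unfolding Ehat_eq_cylinder[OF v empty_subsetI] cylinder_def filters_def using ab(3) frng_mem[OF ab(3)] by blast
  ultimately show "c \<in> \<Union>{spi_basic L a b B | a b B. a \<in> Mor L \<and> b \<in> Mor L \<and> B \<in> spi_basis L}"
    unfolding spi_basic_def using t ab by blast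
qed

lemma pg_set_subset_pg_basic_cover:
  "pg_set P L \<subseteq>
     \<Union>{pg_basic P L m n U V | m n U V. m \<in> P \<and> n \<in> P \<and> openin (filter_top L) U \<and> openin (filter_top L) V}"
proof
  fix p assume p: "p \<in> pg_set P L"
  then obtain x m n y where "p = (x, m - n, y)" "x \<in> filters L" "y \<in> filters L" "m \<in> P" "n \<in> P"
    "in_dom L x m" "in_dom L y n" "fshift L x m = fshift L y n"
    unfolding pg_set_def by blast
  then have "p \<in> pg_basic P L m n (filters L) (filters L)" "m \<in> P" "n \<in> P"
    using p unfolding pg_basic_def by blast+
  moreover have "openin (filter_top L) (filters L)" using openin_topspace[of "filter_top L"]
    unfolding topspace_filter_top .
  ultimately show "p \<in> \<Union>{pg_basic P L m n U V | m n U V. m \<in> P \<and> n \<in> P \<and>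
      openin (filter_top L) U \<and> openin (filter_top L) V}" by blast
qed

lemma topspace_spi_top: "topspace (spi_top L) = spi_set L"
  unfolding spi_top_eq using spi_set_subset_spi_basic_cover by auto

end

context fa_pgraph
begin

lemma Ehat_nbhd_of_fcat:
  assumes t: "(a, b, z) \<in> spi_tri L" and "openin (filter_top L) U" "openin (filter_top L) V"
    and "fcat L a z \<in> U" "fcat L b z \<in> V"
  obtains E where "E \<in> spi_basis L" "z \<in> E" "\<And>z'. z' \<in> E \<Longrightarrow> (a, b, z') \<in> spi_tri L \<Longrightarrow> fcat L a z' \<in> U \<and> fcat L b z' \<in> V"
proof -
  have "a \<in> Mor L" "b \<in> Mor L" "is_filter L z" "src L a = frng L z" "src L b = frng L z"
    using t by (auto simp: mem_spi_tri_iff)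
  then have nbhd: "cylinder_nbhd L z (\<lambda>z'. (src L a = frng L z' \<longrightarrow> fcat L a z' \<in> U) \<and>
      (src L b = frng L z' \<longrightarrow> fcat L b z' \<in> V))"
    using assms by (intro cylinder_nbhd_conj[OF fcat_cylinder_nbhd fcat_cylinder_nbhd]) auto
  obtain E where "E \<in> spi_basis L" "z \<in> E"
    "\<And>z'. z' \<in> E \<Longrightarrow> (src L a = frng L z' \<longrightarrow> fcat L a z' \<in> U) \<and> (src L b = frng L z' \<longrightarrow> fcat L b z' \<in> V)"
    using Ehat_nbhd_if_cylinder_nbhd[OF nbhd] by blast
  then show ?thesis using that by (simp add: mem_spi_tri_iff)
qed

lemma openin_preimage_pg_basic:
  assumes "m \<in> P" "n \<in> P" and U: "openin (filter_top L) U" and V: "openin (filter_top L) V"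
  shows "openin (spi_top L) {c \<in> spi_set L. spi_to_pg L c \<in> pg_basic P L m n U V}"
proof (rule openin_subopen[THEN iffD2], rule ballI)
  fix c assume "c \<in> {c \<in> spi_set L. spi_to_pg L c \<in> pg_basic P L m n U V}"
  then have c: "c \<in> spi_set L" "spi_to_pg L c \<in> pg_basic P L m n U V" by auto
  then obtain a b z where p: "(a, b, z) \<in> spi_tri L" "deg L a = m" "deg L b = n"
    "spi_to_pg L c = tri_to_pg L (a, b, z)" "fcat L a z \<in> U" "fcat L b z \<in> V"
    by (elim pg_basic_cases)
  have c_eq: "c = spi_cls L a b z"
    using c(1) p(1,4) inj_on_spi_to_pg spi_cls_in_spi_set spi_to_pg_spi_cls unfolding inj_on_def by metis
  obtain E where E: "E \<in> spi_basis L" "z \<in> E"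
    "\<And>z'. z' \<in> E \<Longrightarrow> (a, b, z') \<in> spi_tri L \<Longrightarrow> fcat L a z' \<in> U \<and> fcat L b z' \<in> V"
    using Ehat_nbhd_of_fcat[OF p(1) U V p(5,6)] by blast
  have ab: "a \<in> Mor L" "b \<in> Mor L" using p(1) by (auto simp: mem_spi_tri_iff)
  have "openin (spi_top L) (spi_basic L a b E)" using openin_spi_basic[OF ab E(1)] .
  moreover have "c \<in> spi_basic L a b E" unfolding spi_basic_def c_eq using E(2) p(1) by blast
  moreover have "spi_basic L a b E \<subseteq> {c \<in> spi_set L. spi_to_pg L c \<in> pg_basic P L m n U V}"
  proof
    fix d assume "d \<in> spi_basic L a b E"
    then obtain z' where d: "d = spi_cls L a b z'" "z' \<in> E" "(a, b, z') \<in> spi_tri L"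
      unfolding spi_basic_def by blast
    then have "tri_to_pg L (a, b, z') \<in> pg_basic P L m n U V"
      using tri_to_pg_in_pg_basic[OF d(3)] E(3)[OF d(2,3)] p(2,3) by simp
    then show "d \<in> {c \<in> spi_set L. spi_to_pg L c \<in> pg_basic P L m n U V}"
      using d spi_cls_in_spi_set spi_to_pg_spi_cls by simp
  qed
  ultimately show "\<exists>T. openin (spi_top L) T \<and> c \<in> T \<and> T \<subseteq> {c \<in> spi_set L. spi_to_pg L c \<in> pg_basic P L m n U V}"
    by blast
qed

lemma homeomorphic_map_spi_to_pg: "homeomorphic_map (spi_top L) (pg_top P L) (spi_to_pg L)"
  unfolding spi_top_eq pg_top_eq
proof (rule homeomorphic_map_generated_subtopologies
    [OF spi_set_subset_spi_basic_cover pg_set_subset_pg_basic_cover bij_betw_spi_to_pg])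
  fix s assume "s \<in> {spi_basic L a b B | a b B. a \<in> Mor L \<and> b \<in> Mor L \<and> B \<in> spi_basis L}"
  then obtain a b B where s: "s = spi_basic L a b B" "a \<in> Mor L" "b \<in> Mor L" "B \<in> spi_basis L" by blast
  moreover note spi_basic_subset[of a b B]
  ultimately show "openin (subtopology (topology_generated_by
      {pg_basic P L m n U V | m n U V. m \<in> P \<and> n \<in> P \<and> openin (filter_top L) U \<and> openin (filter_top L) V})
      (pg_set P L)) (spi_to_pg L ` (s \<inter> spi_set L))"
    using openin_image_spi_basic unfolding pg_top_eq by (simp add: Int_absorb2)
next
  fix s assume "s \<in> {pg_basic P L m n U V | m n U V. m \<in> P \<and> n \<in> P \<and>
      openin (filter_top L) U \<and> openin (filter_top L) V}"
  then show "openin (subtopology (topology_generated_by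
      {spi_basic L a b B | a b B. a \<in> Mor L \<and> b \<in> Mor L \<and> B \<in> spi_basis L}) (spi_set L))
      {p \<in> spi_set L. spi_to_pg L p \<in> s}"
    using openin_preimage_pg_basic unfolding spi_top_eq by blast
qed

lemma top_groupoid_iso_spi_to_pg:
  "top_groupoid_iso (spi_top L) (spi_set L) (spi_comp L) (spi_mult L) (spi_inv L)
     (pg_top P L) (pg_set P L) pg_comp pg_mult pg_inv (spi_to_pg L)"
  unfolding top_groupoid_iso_def
  using bij_betw_spi_to_pg homeomorphic_map_spi_to_pg spi_comp_iff spi_mult_closed_hom spi_inv_closed_hom by blast

end

theorem theorem6p6:
  fixes P :: "'q::group_add set" and L :: "('a, 'q) pgraph"
  assumes "wqlo P" and "is_pgraph P L" and "finitely_aligned L"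
  shows "(\<exists>f. (\<forall>a b x. (a, b, x) \<in> spi_tri L \<longrightarrow>
               f (spi_cls L a b x) = (fcat L a x, deg L a - deg L b, fcat L b x)) \<and>
             top_groupoid_iso (spi_top L) (spi_set L) (spi_comp L) (spi_mult L) (spi_inv L)
               (pg_top P L) (pg_set P L) pg_comp pg_mult pg_inv f) \<and>
         (\<exists>f. top_groupoid_iso
               (subtopology (spi_top L) (bspi_set L)) (bspi_set L) (spi_comp L) (spi_mult L) (spi_inv L)
               (subtopology (pg_top P L) (bpg_set P L)) (bpg_set P L) pg_comp pg_mult pg_inv f)"
proof -
  interpret fa_pgraph P L
    using assms(2,3) by unfold_locales
  have bspi: "bspi_set L \<subseteq> spi_set L" unfolding bspi_set_def by blast
  have "top_groupoid_iso
      (subtopology (spi_top L) (bspi_set L)) (bspi_set L) (spi_comp L) (spi_mult L) (spi_inv L)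
      (subtopology (pg_top P L) (bpg_set P L)) (bpg_set P L) pg_comp pg_mult pg_inv (spi_to_pg L)"
    using top_groupoid_iso_restrict[OF top_groupoid_iso_spi_to_pg bspi] bspi
    unfolding topspace_spi_top spi_to_pg_bspi_set by blast
  moreover have "spi_to_pg L (spi_cls L a b x) = (fcat L a x, deg L a - deg L b, fcat L b x)"
    if "(a, b, x) \<in> spi_tri L" for a b x
    using spi_to_pg_spi_cls[OF that] by simp
  ultimately show ?thesis using top_groupoid_iso_spi_to_pg by blast
qed

end
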